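(* Let $b\in(0,1)$, $I=(0,1)$. Let $\varphi(x)=x/b$ on $[0,b]$, $\varphi(x)=(1-x)/(1-b)$ on $[b,1]$, and for $s\in(\tfrac12,1)$ let $\varphi^s(x)=x^s/b^s$ on $[0,b]$, $\varphi^s(x)=(1-x)^s/(1-b)^s$ on $[b,1]$, both extended by $0$ outside $I$. Then there exist $s_0\in(\tfrac12,1)$ and $C>0$ such that for all $s\in(s_0,1)$: (i) $\|\varphi^s-\varphi\|_{\widetilde H^s(I)}\le C(1-s)$; (ii) $\|\varphi^s-\varphi\|_{H^1(I)}\le C(1-s)$.
   Context: For $s\in(0,1)$, $C(s)=\dfrac{2^{2s}s\,\Gamma(s+\frac12)}{\sqrt\pi\,\Gamma(1-s)}$ and $\|w\|^2_{\widetilde H^s(I)}=\frac{C(s)}2\iint_{\mathbb R^2}\frac{|\widetilde w(x)-\widetilde w(y)|^2}{|x-y|^{1+2s}}\,\mathrm dy\,\mathrm dx$, where $\widetilde w$ is the extension of $w$ by zero outside $I$. *)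

theory Defs
  imports "HOL-Analysis.Analysis"
begin

definition I01 :: "real set" where "I01 = {0<..<1}"

definition Cs :: "real \<Rightarrow> real" where
  "Cs s = (2::real) powr (2 * s) * s * Gamma (s + 1/2) / (sqrt (pi::real) * Gamma (1 - s))"

text \<open>Squared \<open>\<widetilde>H^s(I)\<close> norm of w, where w :: real => real is already the
  zero extension (values outside I are zero). Nonnegative (ennreal) iterated integral.\<close>
definition Hs_tilde_norm_sq :: "real \<Rightarrow> (real \<Rightarrow> real) \<Rightarrow> ennreal" where
  "Hs_tilde_norm_sq s w =
     ennreal (Cs s / 2) *
     (\<integral>\<^sup>+ x. (\<integral>\<^sup>+ y. ennreal ((w x - w y)^2 / (\<bar>x - y\<bar> powr (1 + 2 * s))) \<partial>lborel) \<partial>lborel)"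

definition smooth_fun :: "(real \<Rightarrow> real) \<Rightarrow> bool" where
  "smooth_fun \<psi> \<longleftrightarrow> (\<forall>n x. ((deriv ^^ n) \<psi>) differentiable (at x))"

definition test_fun :: "(real \<Rightarrow> real) \<Rightarrow> bool" where
  "test_fun \<psi> \<longleftrightarrow> smooth_fun \<psi> \<and>
     (\<exists>a c. 0 < a \<and> c < 1 \<and> (\<forall>x. x \<notin> {a..c} \<longrightarrow> \<psi> x = 0))"

definition weak_deriv :: "(real \<Rightarrow> real) \<Rightarrow> (real \<Rightarrow> real) \<Rightarrow> bool" where
  "weak_deriv w g \<longleftrightarrow>
     (\<forall>\<psi>. test_fun \<psi> \<longrightarrow>
        set_integrable lborel I01 (\<lambda>x. w x * deriv \<psi> x) \<and>
        set_integrable lborel I01 (\<lambda>x. g x * \<psi> x) \<and>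
        (LINT x:I01|lborel. w x * deriv \<psi> x) = - (LINT x:I01|lborel. g x * \<psi> x))"

definition L2_I :: "(real \<Rightarrow> real) \<Rightarrow> bool" where
  "L2_I w \<longleftrightarrow> w \<in> borel_measurable lborel \<and> set_integrable lborel I01 (\<lambda>x. (w x)^2)"

definition in_H1 :: "(real \<Rightarrow> real) \<Rightarrow> bool" where
  "in_H1 w \<longleftrightarrow> L2_I w \<and> (\<exists>g. L2_I g \<and> weak_deriv w g)"

definition H1_norm :: "(real \<Rightarrow> real) \<Rightarrow> real" where
  "H1_norm w = sqrt ((LINT x:I01|lborel. (w x)^2) +
      (LINT x:I01|lborel. ((SOME g. L2_I g \<and> weak_deriv w g) x)^2))"

definition phi :: "real \<Rightarrow> real \<Rightarrow> real" where
  "phi b x = (if 0 \<le> x \<and> x \<le> b then x / b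
              else if b < x \<and> x \<le> 1 then (1 - x) / (1 - b) else 0)"

definition phi_s :: "real \<Rightarrow> real \<Rightarrow> real \<Rightarrow> real" where
  "phi_s s b x = (if 0 \<le> x \<and> x \<le> b then x powr s / b powr s
              else if b < x \<and> x \<le> 1 then (1 - x) powr s / (1 - b) powr s else 0)"

end

theory Submission
  imports Defs "HOL-Computational_Algebra.Polynomial"
begin

(* On [0,1] both functions are powers of the tent T = phi, namely phi_s = T^s, so the difference
   is w = T^s - T.  For 7/8 <= s < 1 elementary calculus gives 0 <= u^s - u <= 8(1-s) u^(3/4) and
   |s u^(s-1) - 1| <= 9(1-s) u^(-1/4) on (0,1], while T(x) >= min x (1-x).  Hence w = O(1-s) and
   w' = O((1-s) T^(-1/4)) with T^(-1/2) integrable, which gives the H^1 bound once the pointwise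
   derivative is identified with the weak one (integration by parts) and weak derivatives are
   shown to be unique a.e. (smooth bumps approximate indicators of intervals).

   For the seminorm, split at |x - y| = 1.  Near the diagonal the mean value theorem bounds the
   integrand by (1-s)^2 |x-y|^(1-2s) (Q x + Q y) with Q integrable, and |t|^(1-2s) has integral
   1/(1-s) over [-1,1]; far from it |w| <= 8(1-s) and |t|^(-1-2s) is integrable.  So the double
   integral is O(1-s), and C(s) = O(1-s) because Gamma(1-s) = Gamma(2-s)/(1-s). *)

section \<open>Functions with derivatives of every order\<close>

fun differentiable_upto :: "nat \<Rightarrow> (real \<Rightarrow> real) \<Rightarrow> bool" where
  "differentiable_upto 0 f \<longleftrightarrow> (\<forall>x. f differentiable (at x))"
| "differentiable_upto (Suc n) f \<longleftrightarrow>
     (\<forall>x. f differentiable (at x)) \<and> differentiable_upto n (deriv f)"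

lemma differentiable_upto_iff:
  "differentiable_upto n f \<longleftrightarrow> (\<forall>k\<le>n. \<forall>x. (deriv ^^ k) f differentiable (at x))"
proof (induction n arbitrary: f)
  case 0
  then show ?case by simp
next
  case (Suc n)
  have "(\<forall>k\<le>Suc n. \<forall>x. (deriv ^^ k) f differentiable (at x)) \<longleftrightarrow>
        (\<forall>x. f differentiable (at x)) \<and> (\<forall>k\<le>n. \<forall>x. (deriv ^^ Suc k) f differentiable (at x))"
    by (metis (no_types, lifting) Suc_le_mono funpow_0 not0_implies_Suc zero_le)
  also have "\<dots> \<longleftrightarrow> (\<forall>x. f differentiable (at x)) \<and>
      (\<forall>k\<le>n. \<forall>x. (deriv ^^ k) (deriv f) differentiable (at x))"
    by (simp add: funpow_Suc_right del: funpow.simps)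
  finally show ?case using Suc by simp
qed

lemma smooth_fun_iff_differentiable_upto: "smooth_fun f \<longleftrightarrow> (\<forall>n. differentiable_upto n f)"
  unfolding smooth_fun_def differentiable_upto_iff by blast

lemma differentiable_upto_imp_differentiable:
  "differentiable_upto n f \<Longrightarrow> f differentiable (at x)"
  by (cases n) auto

lemma differentiable_upto_SucD: "differentiable_upto (Suc n) f \<Longrightarrow> differentiable_upto n f"
  by (induction n arbitrary: f) auto

lemma deriv_eqI: "(\<And>x. (f has_real_derivative f' x) (at x)) \<Longrightarrow> deriv f = f'"
  using DERIV_imp_deriv by blast

lemma differentiable_upto_const: "differentiable_upto n (\<lambda>x. c)"
proof (induction n)
  case (Suc n)
  have "deriv (\<lambda>x::real. c) = (\<lambda>x. 0)"
    by (rule deriv_eqI) auto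
  then show ?case using Suc by (cases n) auto
qed simp

lemma differentiable_upto_ident: "differentiable_upto n (\<lambda>x. x)"
proof (cases n)
  case (Suc m)
  have "deriv (\<lambda>x::real. x) = (\<lambda>x. 1)"
    by (rule deriv_eqI) auto
  then show ?thesis using Suc differentiable_upto_const by auto
qed simp

lemma differentiable_upto_add:
  "differentiable_upto n f \<Longrightarrow> differentiable_upto n g \<Longrightarrow> differentiable_upto n (\<lambda>x. f x + g x)"
proof (induction n arbitrary: f g)
  case (Suc n)
  have "deriv (\<lambda>x. f x + g x) = (\<lambda>x. deriv f x + deriv g x)"
    by (rule deriv_eqI)
       (use Suc.prems in \<open>auto intro!: derivative_eq_intros DERIV_deriv_iff_real_differentiable[THEN iffD2]\<close>)
  then show ?case using Suc by auto
qed auto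

lemma differentiable_upto_mult:
  "differentiable_upto n f \<Longrightarrow> differentiable_upto n g \<Longrightarrow> differentiable_upto n (\<lambda>x. f x * g x)"
proof (induction n arbitrary: f g)
  case (Suc n)
  have "deriv (\<lambda>x. f x * g x) = (\<lambda>x. deriv f x * g x + f x * deriv g x)"
    by (rule deriv_eqI)
       (use Suc.prems in \<open>auto intro!: derivative_eq_intros DERIV_deriv_iff_real_differentiable[THEN iffD2]\<close>)
  moreover have "differentiable_upto n (\<lambda>x. deriv f x * g x)"
    using Suc.IH[of "deriv f" g] Suc.prems differentiable_upto_SucD[OF Suc.prems(2)] by auto
  moreover have "differentiable_upto n (\<lambda>x. f x * deriv g x)"
    using Suc.IH[of f "deriv g"] Suc.prems differentiable_upto_SucD[OF Suc.prems(1)] by auto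
  ultimately show ?case using Suc by (auto intro: differentiable_upto_add)
qed auto

lemma differentiable_upto_compose:
  "differentiable_upto n f \<Longrightarrow> differentiable_upto n g \<Longrightarrow> differentiable_upto n (\<lambda>x. f (g x))"
proof (induction n arbitrary: f g)
  case 0
  then show ?case by (auto intro: differentiable_chain_at[unfolded o_def])
next
  case (Suc n)
  have "deriv (\<lambda>x. f (g x)) = (\<lambda>x. deriv f (g x) * deriv g x)"
    by (rule deriv_eqI)
       (use Suc.prems in \<open>auto intro!: DERIV_chain2[of f] DERIV_deriv_iff_real_differentiable[THEN iffD2]\<close>)
  moreover have "differentiable_upto n (\<lambda>x. deriv f (g x))"
    using Suc.IH[of "deriv f" g] Suc.prems differentiable_upto_SucD[OF Suc.prems(2)] by auto
  moreover have "(\<lambda>x. f (g x)) differentiable (at x)" for x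
    using Suc.prems by (auto intro: differentiable_chain_at[unfolded o_def])
  ultimately show ?case using Suc by (auto intro: differentiable_upto_mult)
qed


section \<open>Smooth bump functions\<close>

text \<open>Every derivative of \<open>t \<mapsto> exp (-1/t)\<close> (extended by 0 for \<open>t \<le> 0\<close>) is again of
  the form \<open>flat_poly p\<close>.\<close>

definition flat_poly :: "real poly \<Rightarrow> real \<Rightarrow> real" where
  "flat_poly p t = (if t > 0 then poly p (1/t) * exp (-1/t) else 0)"

lemma poly_div_exp_tendsto_0: "((\<lambda>z. poly q z / exp z) \<longlongrightarrow> 0) at_top" for q :: "real poly"
proof -
  have "((\<lambda>z. \<Sum>i\<le>degree q. coeff q i * (z ^ i / exp z)) \<longlongrightarrow> (\<Sum>i\<le>degree q. coeff q i * 0)) at_top"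
    by (intro tendsto_sum tendsto_mult tendsto_const) (simp add: tendsto_power_div_exp_0)
  then show ?thesis
    by (simp add: poly_altdef sum_divide_distrib)
qed

lemma flat_poly_has_derivative_at_0: "(flat_poly p has_real_derivative 0) (at 0)"
proof -
  have left: "((\<lambda>y. (flat_poly p y - flat_poly p 0) / (y - 0)) \<longlongrightarrow> 0) (at_left 0)"
  proof (rule tendsto_eventually)
    have "\<forall>\<^sub>F y in at_left (0::real). y < 0" by (simp add: eventually_at_filter)
    then show "\<forall>\<^sub>F y in at_left 0. (flat_poly p y - flat_poly p 0) / (y - 0) = 0"
      by eventually_elim (auto simp: flat_poly_def)
  qed
  have "((\<lambda>y. poly (pCons 0 p) (inverse y) / exp (inverse y)) \<longlongrightarrow> 0) (at_right 0)"
    by (rule filterlim_compose[OF poly_div_exp_tendsto_0 filterlim_inverse_at_top_right])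
  then have right: "((\<lambda>y. (flat_poly p y - flat_poly p 0) / (y - 0)) \<longlongrightarrow> 0) (at_right 0)"
  proof (rule Lim_transform_eventually)
    show "\<forall>\<^sub>F y in at_right 0.
        poly (pCons 0 p) (inverse y) / exp (inverse y) = (flat_poly p y - flat_poly p 0) / (y - 0)"
      unfolding eventually_at_right_field
      by (auto simp: flat_poly_def exp_minus field_simps intro!: exI[of _ 1])
  qed
  show ?thesis
    unfolding has_field_derivative_iff using left right filterlim_at_split by blast
qed

lemma flat_poly_has_derivative:
  "(flat_poly p has_real_derivative flat_poly ([:0,0,1:] * (p - pderiv p)) t) (at t)"
proof -
  consider "t < 0" | "t = 0" | "t > 0" by linarith
  then show ?thesis
  proof cases
    case 1
    have "((\<lambda>_. 0) has_real_derivative flat_poly ([:0,0,1:] * (p - pderiv p)) t) (at t)"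
      using 1 by (simp add: flat_poly_def)
    then show ?thesis
      by (rule has_field_derivative_transform_within_open[where S="{..<0}"])
         (use 1 in \<open>auto simp: flat_poly_def\<close>)
  next
    case 2
    then show ?thesis using flat_poly_has_derivative_at_0 by (simp add: flat_poly_def)
  next
    case 3
    have "((\<lambda>t. poly p (1/t) * exp (-1/t)) has_real_derivative
          poly (pderiv p) (1/t) * (- 1 / t^2) * exp (-1/t) + poly p (1/t) * (exp (-1/t) * (1 / t^2))) (at t)"
      using 3 by (auto intro!: derivative_eq_intros DERIV_chain2[OF poly_DERIV] simp: power2_eq_square)
    moreover have "poly (pderiv p) (1/t) * (- 1 / t^2) * exp (-1/t) + poly p (1/t) * (exp (-1/t) * (1 / t^2))
        = flat_poly ([:0,0,1:] * (p - pderiv p)) t"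
      using 3 by (simp add: flat_poly_def algebra_simps power2_eq_square)
    ultimately have "((\<lambda>t. poly p (1/t) * exp (-1/t)) has_real_derivative
        flat_poly ([:0,0,1:] * (p - pderiv p)) t) (at t)"
      by simp
    then show ?thesis
      by (rule has_field_derivative_transform_within_open[where S="{0<..}"])
         (use 3 in \<open>auto simp: flat_poly_def\<close>)
  qed
qed

lemma differentiable_upto_flat_poly: "differentiable_upto n (flat_poly p)"
proof (induction n arbitrary: p)
  have diff: "flat_poly p differentiable (at x)" for p x
    using flat_poly_has_derivative real_differentiable_def by blast
  {
    case 0
    then show ?case using diff by simp
  next
    case (Suc n)
    have "deriv (flat_poly p) = flat_poly ([:0,0,1:] * (p - pderiv p))"
      by (rule deriv_eqI) (rule flat_poly_has_derivative)
    then show ?case using Suc diff by simp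
  }
qed

lemma flat_poly_1_tendsto_1: "(flat_poly 1 \<longlongrightarrow> 1) at_top"
proof -
  have "((\<lambda>t::real. exp (- 1 / t)) \<longlongrightarrow> exp 0) at_top"
    by (intro tendsto_exp tendsto_divide_0[OF tendsto_const]
        filterlim_at_top_imp_at_infinity filterlim_ident)
  moreover have "\<forall>\<^sub>F t in at_top. exp (- 1 / t) = flat_poly 1 t"
    by (auto simp: flat_poly_def eventually_at_top_dense intro!: exI[of _ 0])
  ultimately show ?thesis by (simp add: Lim_transform_eventually)
qed

definition bump :: "real \<Rightarrow> real \<Rightarrow> real \<Rightarrow> real \<Rightarrow> real" where
  "bump m a c x = flat_poly 1 (m * ((x - a) * (c - x)))"

lemma smooth_bump: "smooth_fun (bump m a c)"
  unfolding smooth_fun_iff_differentiable_upto bump_def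
proof
  fix n
  have affine: "differentiable_upto n (\<lambda>x. u + v * x)" for u v
    by (intro differentiable_upto_add differentiable_upto_mult differentiable_upto_const
        differentiable_upto_ident)
  have "differentiable_upto n (\<lambda>x. m * ((- a + 1 * x) * (c + (- 1) * x)))"
    by (intro differentiable_upto_mult differentiable_upto_const affine)
  then show "differentiable_upto n (\<lambda>x. flat_poly 1 (m * ((x - a) * (c - x))))"
    by (intro differentiable_upto_compose[OF differentiable_upto_flat_poly]) simp
qed

lemma bump_eq_0:
  assumes "a < c" "m > 0" "x \<notin> {a..c}"
  shows "bump m a c x = 0"
proof -
  have "(x - a) * (c - x) < 0"
    using assms by (auto simp: mult_less_0_iff)
  then have "m * ((x - a) * (c - x)) < 0"
    using assms mult_pos_neg by blast
  then show ?thesis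
    by (simp add: bump_def flat_poly_def)
qed

lemma test_fun_bump:
  assumes "0 < a" "a < c" "c < 1" "m > 0"
  shows "test_fun (bump m a c)"
  unfolding test_fun_def using smooth_bump bump_eq_0 assms by blast

lemma bump_bounds: "0 \<le> bump m a c x" "bump m a c x \<le> 1"
  by (auto simp: bump_def flat_poly_def)

lemma bump_tendsto_1:
  assumes "a < x" "x < c"
  shows "(\<lambda>i. bump (real i + 1) (a + (c - a) / (3 + real i)) (c - (c - a) / (3 + real i)) x)
    \<longlonglongrightarrow> 1"
proof -
  have d: "(\<lambda>i. (c - a) / (3 + real i)) \<longlonglongrightarrow> 0"
    by (intro tendsto_divide_0[OF tendsto_const] filterlim_at_top_imp_at_infinity
        filterlim_tendsto_add_at_top[OF tendsto_const filterlim_real_sequentially])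
  have "(\<lambda>i. (x - (a + (c - a) / (3 + real i))) * ((c - (c - a) / (3 + real i)) - x))
      \<longlonglongrightarrow> (x - (a + 0)) * ((c - 0) - x)"
    by (intro tendsto_intros d)
  moreover have "0 < (x - (a + 0)) * ((c - 0) - x)" using assms by simp
  ultimately have "filterlim (\<lambda>i. (x - (a + (c - a) / (3 + real i))) *
      ((c - (c - a) / (3 + real i)) - x) * (real i + 1)) at_top sequentially"
    by (rule filterlim_tendsto_pos_mult_at_top)
       (rule filterlim_at_top_mono[OF filterlim_real_sequentially], auto)
  from filterlim_compose[OF flat_poly_1_tendsto_1 this] show ?thesis
    by (simp add: bump_def mult.commute)
qed


section \<open>Test functions and weak derivatives\<close>

lemma I01_sets [measurable]: "I01 \<in> sets lborel"
  by (simp add: I01_def)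

lemma set_integrable_if_L2_I:
  assumes "L2_I g" shows "set_integrable lborel I01 g"
proof -
  have [measurable]: "g \<in> borel_measurable lborel" using assms by (simp add: L2_I_def)
  have int: "set_integrable lborel I01 (\<lambda>x. 1 + (g x)^2)"
    using assms unfolding L2_I_def I01_def
    by (intro set_integral_add(1)) (auto simp: set_integrable_def integrable_real_indicator)
  have bound: "\<bar>t\<bar> \<le> 1 + t^2" for t :: real
    using zero_le_power2[of "\<bar>t\<bar> - 1/2"] by (simp add: power2_eq_square algebra_simps)
  show ?thesis
    by (rule set_integrable_bound[OF int]) (auto simp: set_borel_measurable_def bound)
qed

lemma set_integrable_mult_bounded:
  fixes f g :: "real \<Rightarrow> real"
  assumes g: "set_integrable lborel A g" and [measurable]: "f \<in> borel_measurable borel"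
    and bound: "\<And>x. \<bar>f x\<bar> \<le> B"
  shows "set_integrable lborel A (\<lambda>x. g x * f x)"
proof (rule set_integrable_bound[OF set_integrable_mult_right[OF g, of B]])
  have [measurable]: "(\<lambda>x. indicator A x * g x) \<in> borel_measurable borel"
    using borel_measurable_integrable[OF g[unfolded set_integrable_def]] by simp
  have "(\<lambda>x. indicator A x * g x * f x) \<in> borel_measurable borel"
    by measurable
  then show "set_borel_measurable lborel A (\<lambda>x. g x * f x)"
    unfolding set_borel_measurable_def by (simp add: mult.assoc)
  have "0 \<le> B" using order_trans[OF abs_ge_zero bound] .
  then show "AE x in lborel. x \<in> A \<longrightarrow> norm (g x * f x) \<le> norm (B * g x)"
  proof (intro AE_I2 impI)
    fix x
    have "\<bar>f x\<bar> * \<bar>g x\<bar> \<le> B * \<bar>g x\<bar>" by (rule mult_right_mono[OF bound abs_ge_zero])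
    then show "norm (g x * f x) \<le> norm (B * g x)"
      using \<open>0 \<le> B\<close> by (simp add: abs_mult mult.commute)
  qed
qed

lemma set_integrable_I01_if_bounded:
  fixes f :: "real \<Rightarrow> real"
  assumes "f \<in> borel_measurable borel" "\<And>x. \<bar>f x\<bar> \<le> B"
  shows "set_integrable lborel I01 f"
proof -
  have "set_integrable lborel I01 (\<lambda>_. 1 :: real)"
    by (simp add: set_integrable_def I01_def integrable_real_indicator)
  from set_integrable_mult_bounded[OF this assms] show ?thesis by simp
qed

lemma set_integral_I01_eq_integral_Icc:
  fixes F :: "real \<Rightarrow> real"
  assumes "set_integrable lborel I01 F" "{a..c} \<subseteq> I01" "\<And>x. x \<notin> {a..c} \<Longrightarrow> F x = 0"
  shows "F integrable_on {a..c}" "(LINT x:I01|lborel. F x) = integral {a..c} F"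
proof -
  have eq: "(\<lambda>x. indicator I01 x *\<^sub>R F x) = (\<lambda>x. indicator {a..c} x *\<^sub>R F x)"
    using assms(2,3) by (auto simp: fun_eq_iff indicator_def)
  have Icc: "set_integrable lborel {a..c} F"
    using assms(1) unfolding set_integrable_def eq .
  then show "F integrable_on {a..c}"
    by (rule set_borel_integral_eq_integral(1))
  have "(LINT x:I01|lborel. F x) = (LINT x:{a..c}|lborel. F x)"
    unfolding set_lebesgue_integral_def eq ..
  also have "\<dots> = integral {a..c} F"
    using Icc by (rule set_borel_integral_eq_integral(2))
  finally show "(LINT x:I01|lborel. F x) = integral {a..c} F" .
qed

lemma
  assumes "test_fun \<psi>"
  shows test_fun_differentiable: "\<psi> differentiable (at x)"
    and test_fun_deriv_differentiable: "deriv \<psi> differentiable (at x)"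
proof -
  have "differentiable_upto 1 \<psi>"
    using assms by (simp add: test_fun_def smooth_fun_iff_differentiable_upto)
  then show "\<psi> differentiable (at x)" "deriv \<psi> differentiable (at x)"
    by (auto intro: differentiable_upto_imp_differentiable)
qed

lemma
  assumes "test_fun \<psi>"
  shows continuous_on_test_fun: "continuous_on UNIV \<psi>"
    and continuous_on_deriv_test_fun: "continuous_on UNIV (deriv \<psi>)"
  using test_fun_differentiable[OF assms] test_fun_deriv_differentiable[OF assms]
  by (meson continuous_at_imp_continuous_on differentiable_imp_continuous_within)+

lemma
  assumes "test_fun \<psi>"
  shows test_fun_measurable: "\<psi> \<in> borel_measurable borel"
    and deriv_test_fun_measurable: "deriv \<psi> \<in> borel_measurable borel"
  using continuous_on_test_fun[OF assms] continuous_on_deriv_test_fun[OF assms]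
  by (simp_all add: borel_measurable_continuous_onI)

lemma test_fun_support:
  assumes "test_fun \<psi>"
  obtains a c where "0 < a" "a \<le> c" "c < 1"
    "\<And>x. x \<notin> {a..c} \<Longrightarrow> \<psi> x = 0" "\<And>x. x \<notin> {a..c} \<Longrightarrow> deriv \<psi> x = 0"
proof -
  obtain a c where ac: "0 < a" "c < 1" and zero: "\<And>x. x \<notin> {a..c} \<Longrightarrow> \<psi> x = 0"
    using assms unfolding test_fun_def by blast
  have deriv_zero: "deriv \<psi> x = 0" if "x \<notin> {a..c}" for x
  proof -
    have "open (- {a..c})" by auto
    have "(\<psi> has_real_derivative 0) (at x)"
      by (rule has_field_derivative_transform_within_open[of "\<lambda>_. 0" 0 x "- {a..c}"])
         (use that zero \<open>open (- {a..c})\<close> in auto)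
    then show ?thesis by (rule DERIV_imp_deriv)
  qed
  show ?thesis
  proof (cases "a \<le> c")
    case True
    then show ?thesis using that ac zero deriv_zero by blast
  next
    case False
    then show ?thesis using that[of "1/2" "1/2"] zero deriv_zero by auto
  qed
qed

lemma test_fun_bounded:
  assumes test: "test_fun \<psi>"
  obtains B where "\<And>x. \<bar>\<psi> x\<bar> \<le> B" "\<And>x. \<bar>deriv \<psi> x\<bar> \<le> B"
proof -
  obtain a c where "0 < a" "a \<le> c" "c < 1"
    and zero: "\<And>x. x \<notin> {a..c} \<Longrightarrow> \<psi> x = 0" "\<And>x. x \<notin> {a..c} \<Longrightarrow> deriv \<psi> x = 0"
    by (rule test_fun_support[OF test]) blast
  have "continuous_on {a..c} \<psi>" "continuous_on {a..c} (deriv \<psi>)"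
    using continuous_on_test_fun[OF test] continuous_on_deriv_test_fun[OF test]
    by (auto intro: continuous_on_subset)
  then have "continuous_on {a..c} (\<lambda>x. \<bar>\<psi> x\<bar> + \<bar>deriv \<psi> x\<bar>)"
    by (intro continuous_intros)
  then have "bounded ((\<lambda>x. \<bar>\<psi> x\<bar> + \<bar>deriv \<psi> x\<bar>) ` {a..c})"
    by (intro compact_imp_bounded compact_continuous_image compact_Icc)
  then obtain B where B: "\<And>x. x \<in> {a..c} \<Longrightarrow> \<bar>\<bar>\<psi> x\<bar> + \<bar>deriv \<psi> x\<bar>\<bar> \<le> B"
    unfolding bounded_real by blast
  have sum: "\<bar>\<psi> x\<bar> + \<bar>deriv \<psi> x\<bar> \<le> max B 0" for x
    using B[of x] zero[of x] by (cases "x \<in> {a..c}") auto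
  show ?thesis
  proof (rule that)
    show "\<bar>\<psi> x\<bar> \<le> max B 0" for x using sum[of x] abs_ge_zero[of "deriv \<psi> x"] by linarith
    show "\<bar>deriv \<psi> x\<bar> \<le> max B 0" for x using sum[of x] abs_ge_zero[of "\<psi> x"] by linarith
  qed
qed

lemma integral_derivative_mult_test_fun_eq_0:
  fixes w g :: "real \<Rightarrow> real"
  assumes S: "finite S" and "a \<le> c" and cont: "continuous_on {a..c} w"
    and deriv: "\<And>x. x \<in> {a<..<c} - S \<Longrightarrow> (w has_real_derivative g x) (at x)"
    and test: "test_fun \<psi>" and "\<psi> a = 0" "\<psi> c = 0"
  shows "integral {a..c} (\<lambda>x. g x * \<psi> x + w x * deriv \<psi> x) = 0"
proof -
  have "((\<lambda>x. g x * \<psi> x + w x * deriv \<psi> x) has_integral w c * \<psi> c - w a * \<psi> a) {a..c}"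
  proof (rule fundamental_theorem_of_calculus_interior_strong[OF S \<open>a \<le> c\<close>])
    show "((\<lambda>x. w x * \<psi> x) has_vector_derivative g x * \<psi> x + w x * deriv \<psi> x) (at x)"
      if "x \<in> {a<..<c} - S" for x
      using DERIV_mult[OF deriv[OF that] DERIV_deriv_iff_real_differentiable[THEN iffD2,
          OF test_fun_differentiable[OF test]]]
      by (simp add: has_real_derivative_iff_has_vector_derivative mult.commute)
    show "continuous_on {a..c} (\<lambda>x. w x * \<psi> x)"
      using cont continuous_on_test_fun[OF test]
      by (intro continuous_on_mult) (auto intro: continuous_on_subset)
  qed
  then show ?thesis using assms by (simp add: integral_unique)
qed

text \<open>Integration by parts on a compact interval around the support of the test function.\<close>

lemma weak_deriv_if_has_derivative:
  fixes w g :: "real \<Rightarrow> real"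
  assumes cont: "continuous_on UNIV w" and bound: "\<And>x. \<bar>w x\<bar> \<le> M"
    and g: "set_integrable lborel I01 g" and S: "finite S"
    and deriv: "\<And>x. x \<in> I01 \<Longrightarrow> x \<notin> S \<Longrightarrow> (w has_real_derivative g x) (at x)"
  shows "weak_deriv w g"
  unfolding weak_deriv_def
proof (intro allI impI)
  fix \<psi> assume test: "test_fun \<psi>"
  obtain a c where ac: "0 < a" "a \<le> c" "c < 1"
    and zero: "\<And>x. x \<notin> {a..c} \<Longrightarrow> \<psi> x = 0" "\<And>x. x \<notin> {a..c} \<Longrightarrow> deriv \<psi> x = 0"
    by (rule test_fun_support[OF test]) blast
  obtain B where B: "\<And>x. \<bar>\<psi> x\<bar> \<le> B" "\<And>x. \<bar>deriv \<psi> x\<bar> \<le> B"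
    by (rule test_fun_bounded[OF test]) blast
  have "w \<in> borel_measurable borel"
    using cont by (rule borel_measurable_continuous_onI)
  from set_integrable_I01_if_bounded[OF this bound]
  have int_w: "set_integrable lborel I01 (\<lambda>x. w x * deriv \<psi> x)"
    by (rule set_integrable_mult_bounded[OF _ deriv_test_fun_measurable[OF test] B(2)])
  have int_g: "set_integrable lborel I01 (\<lambda>x. g x * \<psi> x)"
    by (rule set_integrable_mult_bounded[OF g test_fun_measurable[OF test] B(1)])
  define a' c' where "a' = a / 2" and "c' = (c + 1) / 2"
  have a'c': "0 < a'" "a' < a" "c < c'" "c' < 1" using ac by (auto simp: a'_def c'_def)
  have in_I01: "{a'..c'} \<subseteq> I01" using a'c' by (auto simp: I01_def)
  have "w x * deriv \<psi> x = 0" "g x * \<psi> x = 0" if "x \<notin> {a'..c'}" for x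
    using zero that a'c' by auto
  note w_Icc = set_integral_I01_eq_integral_Icc[OF int_w in_I01 this(1)]
    and g_Icc = set_integral_I01_eq_integral_Icc[OF int_g in_I01 this(2)]
  have "integral {a'..c'} (\<lambda>x. g x * \<psi> x + w x * deriv \<psi> x) = 0"
  proof (rule integral_derivative_mult_test_fun_eq_0[OF S _ _ _ test])
    show "continuous_on {a'..c'} w" using cont by (rule continuous_on_subset) simp
    show "(w has_real_derivative g x) (at x)" if "x \<in> {a'<..<c'} - S" for x
    proof (rule deriv)
      show "x \<in> I01" using that by (intro subsetD[OF in_I01]) auto
    qed (use that in auto)
  qed (use zero a'c' ac in auto)
  then have "integral {a'..c'} (\<lambda>x. g x * \<psi> x) + integral {a'..c'} (\<lambda>x. w x * deriv \<psi> x) = 0"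
    using integral_add[OF g_Icc(1) w_Icc(1)] by simp
  then show "set_integrable lborel I01 (\<lambda>x. w x * deriv \<psi> x) \<and>
      set_integrable lborel I01 (\<lambda>x. g x * \<psi> x) \<and>
      (LINT x:I01|lborel. w x * deriv \<psi> x) = - (LINT x:I01|lborel. g x * \<psi> x)"
    using int_w int_g w_Icc(2) g_Icc(2) by auto
qed

lemma test_funs_tendsto_indicator:
  assumes ac: "0 \<le> a" "a < c" "c \<le> 1"
  obtains \<psi> :: "nat \<Rightarrow> real \<Rightarrow> real"
  where "\<And>i. test_fun (\<psi> i)" "\<And>i x. \<bar>\<psi> i x\<bar> \<le> 1"
    "\<And>x. (\<lambda>i. \<psi> i x) \<longlonglongrightarrow> indicator {a<..<c} x"
proof -
  define d where "d i = (c - a) / (3 + real i)" for i :: nat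
  define \<psi> where "\<psi> i = bump (real i + 1) (a + d i) (c - d i)" for i
  have d: "0 < d i" "d i < (c - a) / 2" for i
  proof -
    show "0 < d i" using ac by (simp add: d_def)
    show "d i < (c - a) / 2" unfolding d_def using ac by (intro divide_strict_left_mono) auto
  qed
  show ?thesis
  proof (rule that)
    show "test_fun (\<psi> i)" for i
      unfolding \<psi>_def using d[of i] ac by (intro test_fun_bump) auto
    show "\<bar>\<psi> i x\<bar> \<le> 1" for i x
      using bump_bounds[of "real i + 1" "a + d i" "c - d i" x] unfolding \<psi>_def by simp
    show "(\<lambda>i. \<psi> i x) \<longlonglongrightarrow> indicator {a<..<c} x" for x
    proof (cases "x \<in> {a<..<c}")
      case True
      then show ?thesis unfolding \<psi>_def d_def using bump_tendsto_1[of a x c] by simp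
    next
      case False
      have "\<psi> i x = 0" for i
        unfolding \<psi>_def using d[of i] False by (intro bump_eq_0) auto
      then show ?thesis using False by simp
    qed
  qed
qed

lemma set_integral_indicator_eq_0_if_test_integrals_eq_0:
  fixes h :: "real \<Rightarrow> real"
  assumes hi: "set_integrable lborel I01 h" and [measurable]: "h \<in> borel_measurable lborel"
    and test: "\<And>\<psi>. test_fun \<psi> \<Longrightarrow> (LINT x:I01|lborel. h x * \<psi> x) = 0"
    and ac: "0 \<le> a" "a < c" "c \<le> 1"
  shows "(LINT x:I01|lborel. h x * indicator {a<..<c} x) = 0"
proof -
  obtain \<psi> where test_\<psi>: "\<And>i. test_fun (\<psi> i)" and bounded: "\<And>i x. \<bar>\<psi> i x\<bar> \<le> 1"
    and lim: "\<And>x. (\<lambda>i. \<psi> i x) \<longlonglongrightarrow> indicator {a<..<c} x"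
    by (rule test_funs_tendsto_indicator[OF ac]) blast
  have [measurable]: "\<psi> i \<in> borel_measurable lborel" for i
    using test_fun_measurable[OF test_\<psi>] by simp
  have "(\<lambda>i. \<integral>x. indicator I01 x *\<^sub>R (h x * \<psi> i x) \<partial>lborel)
      \<longlonglongrightarrow> (\<integral>x. indicator I01 x *\<^sub>R (h x * indicator {a<..<c} x) \<partial>lborel)"
  proof (rule integral_dominated_convergence[where w="\<lambda>x. indicator I01 x *\<^sub>R \<bar>h x\<bar>"])
    show "integrable lborel (\<lambda>x. indicator I01 x *\<^sub>R \<bar>h x\<bar>)"
      using set_integrable_abs[OF hi] unfolding set_integrable_def .
    show "AE x in lborel. (\<lambda>i. indicator I01 x *\<^sub>R (h x * \<psi> i x))
        \<longlonglongrightarrow> indicator I01 x *\<^sub>R (h x * indicator {a<..<c} x)"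
      using lim by (intro AE_I2 tendsto_intros) auto
    show "AE x in lborel. norm (indicator I01 x *\<^sub>R (h x * \<psi> i x)) \<le> indicator I01 x *\<^sub>R \<bar>h x\<bar>" for i
    proof (intro AE_I2)
      fix x
      have "\<bar>h x\<bar> * \<bar>\<psi> i x\<bar> \<le> \<bar>h x\<bar>" using bounded[of i x] by (simp add: mult_left_le)
      then show "norm (indicator I01 x *\<^sub>R (h x * \<psi> i x)) \<le> indicator I01 x *\<^sub>R \<bar>h x\<bar>"
        by (auto simp: indicator_def abs_mult)
    qed
  qed auto
  moreover have "(\<integral>x. indicator I01 x *\<^sub>R (h x * \<psi> i x) \<partial>lborel) = 0" for i
    using test[OF test_\<psi>] unfolding set_lebesgue_integral_def .
  ultimately have "(\<lambda>i::nat. 0) \<longlonglongrightarrow> (\<integral>x. indicator I01 x *\<^sub>R (h x * indicator {a<..<c} x) \<partial>lborel)"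
    by simp
  then show ?thesis
    unfolding set_lebesgue_integral_def by (simp add: LIMSEQ_const_iff)
qed

lemma integral_half_line_pos_part_eq_neg_part:
  fixes h :: "real \<Rightarrow> real"
  assumes hi: "set_integrable lborel I01 h" and [measurable]: "h \<in> borel_measurable lborel"
    and intervals: "\<And>a c. 0 \<le> a \<Longrightarrow> a < c \<Longrightarrow> c \<le> 1 \<Longrightarrow>
      (LINT x:I01|lborel. h x * indicator {a<..<c} x) = 0"
  shows "(\<integral>y. indicator I01 y * max 0 (h y) * indicator {x<..} y \<partial>lborel)
    = (\<integral>y. indicator I01 y * max 0 (- h y) * indicator {x<..} y \<partial>lborel)"
proof -
  have habs: "integrable lborel (\<lambda>x. indicator I01 x * \<bar>h x\<bar>)"
    using set_integrable_abs[OF hi] unfolding set_integrable_def by simp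
  have int: "integrable lborel (\<lambda>y. indicator I01 y * max 0 (\<sigma> * h y) * indicator {x<..} y)"
    if "\<sigma> = 1 \<or> \<sigma> = -1" for \<sigma>
    by (rule Bochner_Integration.integrable_bound[OF habs]) (use that in \<open>auto simp: indicator_def\<close>)
  have "(\<integral>y. indicator I01 y * max 0 (h y) * indicator {x<..} y \<partial>lborel)
      - (\<integral>y. indicator I01 y * max 0 (- h y) * indicator {x<..} y \<partial>lborel)
      = (\<integral>y. indicator I01 y * max 0 (h y) * indicator {x<..} y
            - indicator I01 y * max 0 (- h y) * indicator {x<..} y \<partial>lborel)"
    using int[of 1] int[of "-1"] by (simp add: Bochner_Integration.integral_diff)
  also have "\<dots> = (\<integral>y. indicator I01 y * h y * indicator {x<..} y \<partial>lborel)"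
    by (intro Bochner_Integration.integral_cong) (auto simp: indicator_def max_def)
  also have "\<dots> = 0"
  proof (cases "x < 1")
    case True
    have "(\<integral>y. indicator I01 y * h y * indicator {x<..} y \<partial>lborel)
        = (LINT y:I01|lborel. h y * indicator {max 0 x<..<1} y)"
      unfolding set_lebesgue_integral_def
      by (intro Bochner_Integration.integral_cong) (auto simp: indicator_def I01_def)
    also have "\<dots> = 0" using True by (intro intervals) auto
    finally show ?thesis .
  next
    case False
    then have "(\<lambda>y. indicator I01 y * h y * indicator {x<..} y) = (\<lambda>y. 0)"
      by (auto simp: fun_eq_iff indicator_def I01_def)
    then show ?thesis by simp
  qed
  finally show ?thesis by simp
qed

text \<open>The measures with densities \<open>h\<^sup>+\<close> and \<open>h\<^sup>-\<close> on \<open>I01\<close> agree on all half-lines, hence coincide.\<close>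

lemma AE_eq_0_if_interval_integrals_eq_0:
  fixes h :: "real \<Rightarrow> real"
  assumes hi: "set_integrable lborel I01 h" and hm [measurable]: "h \<in> borel_measurable lborel"
    and intervals: "\<And>a c. 0 \<le> a \<Longrightarrow> a < c \<Longrightarrow> c \<le> 1 \<Longrightarrow>
      (LINT x:I01|lborel. h x * indicator {a<..<c} x) = 0"
  shows "AE x in lborel. x \<in> I01 \<longrightarrow> h x = 0"
proof -
  define pos where "pos x = ennreal (indicator I01 x * max 0 (h x))" for x
  define neg where "neg x = ennreal (indicator I01 x * max 0 (- h x))" for x
  have habs: "integrable lborel (\<lambda>x. indicator I01 x * \<bar>h x\<bar>)"
    using set_integrable_abs[OF hi] unfolding set_integrable_def by simp
  have int_part: "integrable lborel (\<lambda>y. indicator I01 y * max 0 (\<sigma> * h y) * indicator A y)"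
    if "\<sigma> = 1 \<or> \<sigma> = -1" "A \<in> sets lborel" for \<sigma> A
    by (rule Bochner_Integration.integrable_bound[OF habs]) (use that in \<open>auto simp: indicator_def\<close>)
  have nn_part: "(\<integral>\<^sup>+y. ennreal (indicator I01 y * max 0 (\<sigma> * h y)) * indicator A y \<partial>lborel)
      = ennreal (\<integral>y. indicator I01 y * max 0 (\<sigma> * h y) * indicator A y \<partial>lborel)"
    if "\<sigma> = 1 \<or> \<sigma> = -1" "A \<in> sets lborel" for \<sigma> A
  proof -
    have "ennreal a * indicator A y = ennreal (a * indicator A y)" for a y
      by (auto simp: indicator_def)
    then show ?thesis
      by (simp only:) (rule nn_integral_eq_integral[OF int_part[OF that]], auto)
  qed
  have "density lborel pos = density lborel neg"
  proof (rule measure_eqI_lessThan)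
    show "sets (density lborel pos) = sets borel" "sets (density lborel neg) = sets borel" by auto
    show "emeasure (density lborel pos) {x<..} < \<infinity>" for x
      unfolding pos_def using nn_part[of 1 "{x<..}"] by (subst emeasure_density) auto
    show "emeasure (density lborel pos) {x<..} = emeasure (density lborel neg) {x<..}" for x
      unfolding pos_def neg_def using nn_part[of 1 "{x<..}"] nn_part[of "-1" "{x<..}"]
        integral_half_line_pos_part_eq_neg_part[OF hi hm intervals, of x]
      by (subst (1 2) emeasure_density) auto
  qed
  moreover have "pos \<in> borel_measurable lborel" "neg \<in> borel_measurable lborel"
    unfolding pos_def neg_def by measurable
  ultimately have "AE x in lborel. pos x = neg x"
    using sigma_finite_measure.density_unique[OF sigma_finite_lborel] by blast
  then show ?thesis
  proof eventually_elim
    fix x assume "pos x = neg x"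
    then show "x \<in> I01 \<longrightarrow> h x = 0"
      by (auto simp: pos_def neg_def indicator_def max_def split: if_splits)
  qed
qed

lemma weak_deriv_unique:
  assumes "L2_I g1" "weak_deriv w g1" "L2_I g2" "weak_deriv w g2"
  shows "AE x in lborel. x \<in> I01 \<longrightarrow> g1 x = g2 x"
proof -
  have hi: "set_integrable lborel I01 (\<lambda>x. g1 x - g2 x)"
    using set_integrable_if_L2_I[OF assms(1)] set_integrable_if_L2_I[OF assms(3)]
    by (rule set_integral_diff(1))
  have hm: "(\<lambda>x. g1 x - g2 x) \<in> borel_measurable lborel"
    using assms unfolding L2_I_def by auto
  have test: "(LINT x:I01|lborel. (g1 x - g2 x) * \<psi> x) = 0" if "test_fun \<psi>" for \<psi>
  proof -
    have int: "set_integrable lborel I01 (\<lambda>x. g1 x * \<psi> x)" "set_integrable lborel I01 (\<lambda>x. g2 x * \<psi> x)"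
      and eq: "(LINT x:I01|lborel. g1 x * \<psi> x) = (LINT x:I01|lborel. g2 x * \<psi> x)"
      using assms(2,4) that unfolding weak_deriv_def by auto
    show ?thesis
      unfolding left_diff_distrib set_integral_diff(2)[OF int] eq by simp
  qed
  have "AE x in lborel. x \<in> I01 \<longrightarrow> g1 x - g2 x = 0"
    using AE_eq_0_if_interval_integrals_eq_0[OF hi hm
        set_integral_indicator_eq_0_if_test_integrals_eq_0[OF hi hm test]] .
  then show ?thesis by eventually_elim auto
qed


section \<open>Elementary bounds for \<open>u powr s - u\<close>\<close>

text \<open>Write \<open>u = exp l\<close> with \<open>l \<le> 0\<close>: then \<open>u powr s - u = u powr s * (1 - u powr (1 - s))\<close>
  is at most \<open>(1 - s) * (-l) * u powr s\<close>, and \<open>-l * u powr (1/8) \<le> 8\<close> absorbs the logarithm.\<close>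

lemma powr_minus_self_bounds:
  fixes s u :: real
  assumes s: "7/8 \<le> s" "s < 1" and u: "0 \<le> u" "u \<le> 1"
  shows "0 \<le> u powr s - u" "u powr s - u \<le> 8 * (1 - s) * u powr (3/4)"
proof -
  have "0 \<le> u powr s - u \<and> u powr s - u \<le> 8 * (1 - s) * u powr (3/4)"
  proof (cases "u = 0")
    case False
    then have up: "u > 0" using u by simp
    define l where "l = ln u"
    have l0: "l \<le> 0" using u up by (simp add: l_def)
    have e1: "u powr s = exp (s * l)" "u = exp l" "u powr (3/4) = exp (3/4 * l)"
      using up by (simp_all add: l_def powr_def)
    have split: "u powr s - u = exp (s * l) * (1 - exp ((1 - s) * l))"
    proof -
      have "exp l = exp (s * l) * exp ((1 - s) * l)" by (simp add: exp_add[symmetric] algebra_simps)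
      then show ?thesis using e1 by (simp add: algebra_simps)
    qed
    have a: "1 - exp ((1 - s) * l) \<le> (1 - s) * (- l)"
      using exp_ge_add_one_self[of "(1 - s) * l"] by (simp add: algebra_simps)
    have "(1 - s) * l \<le> 0" using l0 s by (intro mult_nonneg_nonpos) auto
    then have a0: "0 \<le> 1 - exp ((1 - s) * l)" by simp
    have "(s - 7/8) * l \<le> 0" using s l0 by (intro mult_nonneg_nonpos) auto
    then have b: "exp (s * l) \<le> exp (7/8 * l)"
      by (simp add: algebra_simps)
    have c: "exp (l / 8) * (- l) \<le> 8"
    proof -
      have "- l \<le> 8 * exp (- l / 8)" using exp_ge_add_one_self[of "- l / 8"] by simp
      then have "exp (l / 8) * (- l) \<le> exp (l / 8) * (8 * exp (- l / 8))"
        by (intro mult_left_mono) auto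
      also have "\<dots> = 8" by (simp add: exp_minus field_simps)
      finally show ?thesis .
    qed
    have "u powr s - u \<le> exp (s * l) * ((1 - s) * (- l))"
      unfolding split by (intro mult_left_mono a) auto
    also have "\<dots> \<le> exp (7/8 * l) * ((1 - s) * (- l))"
      using l0 s by (intro mult_right_mono b mult_nonneg_nonneg) auto
    also have "\<dots> = (1 - s) * exp (3/4 * l) * (exp (l / 8) * (- l))"
      by (simp add: exp_add[symmetric] algebra_simps)
    also have "\<dots> \<le> (1 - s) * exp (3/4 * l) * 8"
      using s by (intro mult_left_mono c) auto
    finally have "u powr s - u \<le> 8 * (1 - s) * exp (3/4 * l)" by (simp add: algebra_simps)
    moreover have "0 \<le> u powr s - u" unfolding split using a0 by simp
    ultimately show ?thesis using e1(3) by simp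
  qed simp
  then show "0 \<le> u powr s - u" "u powr s - u \<le> 8 * (1 - s) * u powr (3/4)" by auto
qed

lemma abs_deriv_powr_minus_self_le:
  fixes s t :: real
  assumes s: "7/8 \<le> s" "s < 1" and t: "0 < t" "t \<le> 1"
  shows "\<bar>s * t powr (s - 1) - 1\<bar> \<le> 9 * (1 - s) * t powr (-1/4)"
proof -
  define L where "L = - ln t"
  define a where "a = 1 - s"
  define E where "E = exp (a * L)"
  have L0: "L \<ge> 0" using t by (simp add: L_def)
  have a: "0 < a" "a \<le> 1/8" using s by (auto simp: a_def)
  have tE: "t powr (s - 1) = E" and tq: "t powr (-1/4) = exp (L / 4)"
    using t by (simp_all add: powr_def E_def L_def a_def algebra_simps)
  have E1: "E \<ge> 1" using a L0 by (simp add: E_def)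
  have lower: "s * E - 1 \<ge> - a"
    using mult_left_mono[OF E1, of s] s by (simp add: a_def)
  have "E - 1 \<le> a * L * E"
  proof -
    have "E * (1 - a * L) \<le> E * exp (- (a * L))"
      using exp_ge_add_one_self[of "- (a * L)"] E1 by (intro mult_left_mono) auto
    also have "E * exp (- (a * L)) = 1" by (simp add: E_def exp_minus)
    finally show ?thesis by (simp add: algebra_simps)
  qed
  moreover have "s * E - 1 \<le> E - 1"
    using mult_right_mono[of s 1 E] s E1 by simp
  moreover have "a * L * E \<le> a * (8 * exp (L / 4))"
  proof -
    have E8: "E \<le> exp (L / 8)"
      unfolding E_def using mult_right_mono[OF a(2) L0] by simp
    have L8: "L * exp (L / 8) \<le> 8 * exp (L / 4)"
    proof -
      have "L / 8 \<le> exp (L / 8)" using exp_ge_add_one_self[of "L / 8"] by linarith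
      then have "L * exp (L / 8) \<le> (8 * exp (L / 8)) * exp (L / 8)"
        by (intro mult_right_mono) auto
      also have "\<dots> = 8 * exp (L / 4)" by (simp add: exp_add[symmetric])
      finally show ?thesis .
    qed
    have "L * E \<le> 8 * exp (L / 4)"
      using mult_left_mono[OF E8 L0] L8 by linarith
    then show ?thesis using a by (simp add: mult.assoc mult_left_mono)
  qed
  moreover have "a \<le> a * exp (L / 4)" using a L0 by (simp add: mult_le_cancel_left1)
  ultimately have "\<bar>s * E - 1\<bar> \<le> 9 * a * exp (L / 4)"
    using lower by (simp add: abs_le_iff)
  then show ?thesis using tE tq by (simp add: a_def)
qed

lemma powr_minus_self_diff_le:
  fixes s u v :: real
  assumes s: "7/8 \<le> s" "s < 1" and uv: "0 \<le> u" "u \<le> v" "v \<le> 1"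
  shows "\<bar>(v powr s - v) - (u powr s - u)\<bar> \<le> 9 * (1 - s) * (v - u) * (u powr (-1/4) + v powr (-1/4))"
proof (cases "u = 0")
  case True
  show ?thesis
  proof (cases "v = 0")
    case False
    then have vp: "v > 0" using uv by simp
    have "v powr (3/4) = v * v powr (-1/4)"
      using vp powr_add[of v 1 "-1/4"] by simp
    then have "\<bar>v powr s - v\<bar> \<le> 8 * (1 - s) * (v * v powr (-1/4))"
      using powr_minus_self_bounds[OF s, of v] uv by simp
    also have "\<dots> \<le> 9 * (1 - s) * (v * v powr (-1/4))"
      using s vp by (intro mult_right_mono) auto
    finally show ?thesis using True by simp
  qed (use True in simp)
next
  case False
  then have up: "u > 0" using uv by simp
  show ?thesis
  proof (cases "u = v")
    case False
    then have "u < v" using uv by simp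
    have "((\<lambda>u. u powr s - u) has_real_derivative s * z powr (s - 1) - 1) (at z)" if "0 < z" for z
      using that by (auto intro!: derivative_eq_intros)
    then obtain z where z: "u < z" "z < v"
        "(v powr s - v) - (u powr s - u) = (v - u) * (s * z powr (s - 1) - 1)"
      using MVT2[of u v "\<lambda>u. u powr s - u" "\<lambda>z. s * z powr (s - 1) - 1"] \<open>u < v\<close> up by force
    have "\<bar>s * z powr (s - 1) - 1\<bar> \<le> 9 * (1 - s) * z powr (-1/4)"
      using abs_deriv_powr_minus_self_le[OF s, of z] z up uv by simp
    also have "\<dots> \<le> 9 * (1 - s) * u powr (-1/4)"
      using s z up by (intro mult_left_mono powr_mono2') auto
    also have "\<dots> \<le> 9 * (1 - s) * (u powr (-1/4) + v powr (-1/4))"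
      using s by (intro mult_left_mono) auto
    finally have "(v - u) * \<bar>s * z powr (s - 1) - 1\<bar> \<le> (v - u) * (9 * (1 - s) * (u powr (-1/4) + v powr (-1/4)))"
      using \<open>u < v\<close> by (intro mult_left_mono) auto
    moreover have "\<bar>(v powr s - v) - (u powr s - u)\<bar> = (v - u) * \<bar>s * z powr (s - 1) - 1\<bar>"
      unfolding z(3) using \<open>u < v\<close> by (simp add: abs_mult)
    ultimately show ?thesis by (simp add: mult_ac)
  qed simp
qed


section \<open>The tent function\<close>

definition tent :: "real \<Rightarrow> real \<Rightarrow> real" where
  "tent b x = max 0 (min (x / b) ((1 - x) / (1 - b)))"

definition tent_slope :: "real \<Rightarrow> real \<Rightarrow> real" where
  "tent_slope b x = (if 0 < x \<and> x < b then 1 / b else if b < x \<and> x < 1 then - 1 / (1 - b) else 0)"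

definition edge_weight :: "real \<Rightarrow> real" where
  "edge_weight x = indicator {0<..<1} x * (\<bar>x\<bar> powr (-1/2) + \<bar>x - 1\<bar> powr (-1/2))"

lemma tent_measurable [measurable]: "tent b \<in> borel_measurable borel"
  unfolding tent_def by measurable

lemma tent_slope_measurable [measurable]: "tent_slope b \<in> borel_measurable borel"
  unfolding tent_slope_def by measurable

lemma edge_weight_measurable [measurable]: "edge_weight \<in> borel_measurable borel"
  unfolding edge_weight_def by measurable

lemma edge_weight_nonneg: "0 \<le> edge_weight x"
  by (simp add: edge_weight_def)

lemma continuous_on_tent: "continuous_on UNIV (tent b)"
  unfolding tent_def divide_inverse by (intro continuous_intros)

lemma phi_eq_tent:
  assumes b: "0 < b" "b < 1"
  shows "phi b x = tent b x"
proof -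
  consider "0 \<le> x" "x \<le> b" | "b < x" "x \<le> 1" | "x < 0" | "1 < x" by linarith
  then show ?thesis
  proof cases
    case 1
    then have "x / b \<le> (1 - x) / (1 - b)"
      using b by (simp add: divide_simps algebra_simps mult_left_mono)
    then show ?thesis using 1 b by (simp add: phi_def tent_def)
  next
    case 2
    then have "(1 - x) / (1 - b) \<le> x / b"
      using b by (simp add: divide_simps algebra_simps mult_right_mono)
    then show ?thesis using 2 b by (simp add: phi_def tent_def)
  next
    case 3
    then have "x / b < 0" using b by (simp add: divide_neg_pos)
    then show ?thesis using 3 b by (simp add: phi_def tent_def)
  next
    case 4
    then have "(1 - x) / (1 - b) < 0" using b by (simp add: divide_neg_pos)
    then show ?thesis using 4 b by (simp add: phi_def tent_def)
  qed
qed

lemma phi_s_eq_tent_powr: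
  assumes b: "0 < b" "b < 1"
  shows "phi_s s b x = tent b x powr s"
  using phi_eq_tent[OF b, of x, symmetric] b
  by (auto simp: phi_s_def phi_def powr_divide)

lemma tent_bounds:
  assumes b: "0 < b" "b < 1"
  shows "0 \<le> tent b x" "tent b x \<le> 1"
  using phi_eq_tent[OF b, of x, symmetric] b by (auto simp: phi_def tent_def)

lemma tent_eq_0:
  assumes b: "0 < b" "b < 1" and x: "x \<notin> {0<..<1}"
  shows "tent b x = 0"
  using phi_eq_tent[OF b, of x, symmetric] b x by (auto simp: phi_def)

lemma tent_ge_min:
  assumes b: "0 < b" "b < 1" and x: "0 < x" "x < 1"
  shows "min x (1 - x) \<le> tent b x"
proof -
  have "x \<le> x / b" using b x by (simp add: le_divide_eq)
  moreover have "1 - x \<le> (1 - x) / (1 - b)" using b x by (simp add: le_divide_eq)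
  ultimately show ?thesis by (auto simp: tent_def)
qed

lemma tent_pos:
  assumes b: "0 < b" "b < 1" and x: "0 < x" "x < 1"
  shows "0 < tent b x"
  using tent_ge_min[OF b x] x by linarith

lemma tent_lipschitz:
  assumes b: "0 < b" "b < 1"
  shows "\<bar>tent b x - tent b y\<bar> \<le> (1/b + 1/(1-b)) * \<bar>x - y\<bar>"
proof -
  have max: "\<bar>max 0 p - max 0 q\<bar> \<le> \<bar>p - q\<bar>" for p q :: real
    by (auto simp: max_def)
  have min: "\<bar>min p1 p2 - min q1 q2\<bar> \<le> \<bar>p1 - q1\<bar> + \<bar>p2 - q2\<bar>" for p1 p2 q1 q2 :: real
    by (auto simp: min_def)
  have "\<bar>tent b x - tent b y\<bar> \<le> \<bar>x / b - y / b\<bar> + \<bar>(1 - x) / (1 - b) - (1 - y) / (1 - b)\<bar>"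
    unfolding tent_def using max min order_trans by blast
  also have "\<bar>x / b - y / b\<bar> = \<bar>x - y\<bar> / b"
    using b by (simp add: diff_divide_distrib[symmetric])
  also have "\<bar>(1 - x) / (1 - b) - (1 - y) / (1 - b)\<bar> = \<bar>x - y\<bar> / (1 - b)"
    using b by (simp add: diff_divide_distrib[symmetric] abs_minus_commute)
  finally show ?thesis by (simp add: algebra_simps)
qed

lemma tent_has_derivative:
  assumes b: "0 < b" "b < 1" and x: "0 < x" "x < 1" "x \<noteq> b"
  shows "(tent b has_real_derivative tent_slope b x) (at x)"
proof (cases "x < b")
  case True
  have "((\<lambda>y. y / b) has_real_derivative 1 / b) (at x)"
    by (intro DERIV_cdivide DERIV_ident)
  then have "((\<lambda>y. y / b) has_real_derivative tent_slope b x) (at x)"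
    using True x by (simp add: tent_slope_def)
  then show ?thesis
    by (rule has_field_derivative_transform_within_open[where S="{0<..<b}"])
       (use True x b in \<open>auto simp: phi_eq_tent[symmetric] phi_def\<close>)
next
  case False
  have "((\<lambda>y. (1 - y) / (1 - b)) has_real_derivative (0 - 1) / (1 - b)) (at x)"
    by (intro DERIV_cdivide DERIV_diff DERIV_const DERIV_ident)
  then have "((\<lambda>y. (1 - y) / (1 - b)) has_real_derivative tent_slope b x) (at x)"
    using False x by (simp add: tent_slope_def)
  then show ?thesis
    by (rule has_field_derivative_transform_within_open[where S="{b<..<1}"])
       (use False x b in \<open>auto simp: phi_eq_tent[symmetric] phi_def\<close>)
qed

lemma tent_powr_sq_le_edge_weight:
  assumes b: "0 < b" "b < 1"
  shows "(tent b x powr (-1/4))^2 \<le> edge_weight x"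
proof -
  have sq: "(tent b x powr (-1/4))^2 = tent b x powr (-1/2)"
    by (simp add: power2_eq_square powr_add[symmetric])
  show ?thesis
  proof (cases "x \<in> {0<..<1}")
    case True
    then have x: "0 < x" "x < 1" by auto
    define m where "m = min x (1 - x)"
    have m: "0 < m" "m \<le> tent b x" using x tent_ge_min[OF b x] by (auto simp: m_def)
    have "tent b x powr (-1/2) \<le> m powr (-1/2)" using m by (intro powr_mono2') auto
    also have "m powr (-1/2) \<le> \<bar>x\<bar> powr (-1/2) + \<bar>x - 1\<bar> powr (-1/2)"
      using x by (cases "x \<le> 1 - x") (auto simp: m_def min_def abs_minus_commute)
    finally show ?thesis using sq True by (simp add: edge_weight_def)
  next
    case False
    then show ?thesis using sq tent_eq_0[OF b False] by (simp add: edge_weight_def)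
  qed
qed


section \<open>The defect \<open>\<phi>\<^sup>s - \<phi>\<close>\<close>

definition tent_defect :: "real \<Rightarrow> real \<Rightarrow> real \<Rightarrow> real" where
  "tent_defect s b x = tent b x powr s - tent b x"

definition tent_defect_deriv :: "real \<Rightarrow> real \<Rightarrow> real \<Rightarrow> real" where
  "tent_defect_deriv s b x = tent_slope b x * (s * tent b x powr (s - 1) - 1)"

lemma tent_defect_measurable [measurable]: "tent_defect s b \<in> borel_measurable borel"
  unfolding tent_defect_def by measurable

lemma tent_defect_deriv_measurable [measurable]: "tent_defect_deriv s b \<in> borel_measurable borel"
  unfolding tent_defect_deriv_def by measurable

lemma phi_s_minus_phi_eq_tent_defect:
  assumes "0 < b" "b < 1"
  shows "(\<lambda>x. phi_s s b x - phi b x) = tent_defect s b"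
  using assms by (simp add: fun_eq_iff tent_defect_def phi_s_eq_tent_powr phi_eq_tent)

lemma continuous_on_tent_defect:
  assumes "0 < s"
  shows "continuous_on UNIV (tent_defect s b)"
proof -
  have "tent b x \<ge> 0" for x by (simp add: tent_def)
  then show ?thesis
    unfolding tent_defect_def[abs_def] using assms
    by (intro continuous_intros continuous_on_powr' continuous_on_tent) auto
qed

lemma tent_defect_has_derivative:
  assumes b: "0 < b" "b < 1" and x: "0 < x" "x < 1" "x \<noteq> b"
  shows "(tent_defect s b has_real_derivative tent_defect_deriv s b x) (at x)"
proof -
  have "((\<lambda>u. u powr s - u) has_real_derivative s * tent b x powr (s - 1) - 1) (at (tent b x))"
    using tent_pos[OF b] x by (auto intro!: derivative_eq_intros)
  from DERIV_chain2[OF this tent_has_derivative[OF b x]] show ?thesis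
    by (simp add: tent_defect_def[abs_def] tent_defect_deriv_def mult.commute)
qed

lemma abs_tent_defect_le:
  assumes b: "0 < b" "b < 1" and s: "7/8 \<le> s" "s < 1"
  shows "\<bar>tent_defect s b x\<bar> \<le> 8 * (1 - s) * indicator {0<..<1} x"
proof (cases "x \<in> {0<..<1}")
  case True
  have "tent b x powr (3/4) \<le> 1" using tent_bounds[OF b] by (intro powr_le1) auto
  then have "8 * (1 - s) * tent b x powr (3/4) \<le> 8 * (1 - s)"
    using s mult_left_mono[of _ 1 "8 * (1 - s)"] by simp
  then have "tent_defect s b x \<le> 8 * (1 - s)"
    using powr_minus_self_bounds(2)[OF s tent_bounds[OF b, of x]] unfolding tent_defect_def
    by linarith
  then show ?thesis
    using powr_minus_self_bounds(1)[OF s tent_bounds[OF b, of x]] True by (simp add: tent_defect_def)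
next
  case False
  then show ?thesis using tent_eq_0[OF b False] by (simp add: tent_defect_def)
qed

lemma tent_defect_diff_le:
  assumes b: "0 < b" "b < 1" and s: "7/8 \<le> s" "s < 1"
  shows "\<bar>tent_defect s b x - tent_defect s b y\<bar>
    \<le> 9 * (1 - s) * (1/b + 1/(1-b)) * \<bar>x - y\<bar> * (tent b x powr (-1/4) + tent b y powr (-1/4))"
proof -
  define L where "L = 1/b + 1/(1-b)"
  have ordered: "\<bar>(v powr s - v) - (u powr s - u)\<bar>
      \<le> 9 * (1 - s) * L * \<bar>x - y\<bar> * (u powr (-1/4) + v powr (-1/4))"
    if uv: "u = tent b x \<and> v = tent b y \<or> u = tent b y \<and> v = tent b x" and le: "u \<le> v" for u v
  proof -
    have r: "0 \<le> u" "v \<le> 1" using uv tent_bounds[OF b] by auto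
    have d: "v - u \<le> L * \<bar>x - y\<bar>"
      using uv tent_lipschitz[OF b, of x y] tent_lipschitz[OF b, of y x]
      by (auto simp: L_def abs_minus_commute)
    have "\<bar>(v powr s - v) - (u powr s - u)\<bar> \<le> 9 * (1 - s) * (v - u) * (u powr (-1/4) + v powr (-1/4))"
      by (rule powr_minus_self_diff_le[OF s r(1) le r(2)])
    also have "\<dots> \<le> 9 * (1 - s) * (L * \<bar>x - y\<bar>) * (u powr (-1/4) + v powr (-1/4))"
      using s d by (intro mult_right_mono mult_left_mono) auto
    finally show ?thesis by (simp add: mult.assoc)
  qed
  show ?thesis
  proof (cases "tent b x \<le> tent b y")
    case True
    then show ?thesis
      using ordered[of "tent b x" "tent b y"] by (simp add: tent_defect_def abs_minus_commute L_def)
  next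
    case False
    then show ?thesis
      using ordered[of "tent b y" "tent b x"] by (simp add: tent_defect_def add.commute L_def)
  qed
qed

lemma tent_defect_deriv_sq_le:
  assumes b: "0 < b" "b < 1" and s: "7/8 \<le> s" "s < 1"
  shows "(tent_defect_deriv s b x)^2 \<le> 81 * (1 - s)^2 * (1/b + 1/(1-b))^2 * edge_weight x"
proof (cases "0 < x \<and> x < 1 \<and> x \<noteq> b")
  case True
  have t: "0 < tent b x" "tent b x \<le> 1" using tent_pos[OF b] tent_bounds[OF b] True by auto
  have "\<bar>tent_slope b x\<bar> \<le> 1/b + 1/(1-b)" using b by (auto simp: tent_slope_def)
  then have "\<bar>tent_defect_deriv s b x\<bar> \<le> (1/b + 1/(1-b)) * (9 * (1 - s) * tent b x powr (-1/4))"
    unfolding tent_defect_deriv_def abs_mult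
    using abs_deriv_powr_minus_self_le[OF s t] by (intro mult_mono) auto
  then have "(tent_defect_deriv s b x)^2 \<le> ((1/b + 1/(1-b)) * (9 * (1 - s) * tent b x powr (-1/4)))^2"
    by (metis abs_ge_zero power2_abs power_mono)
  also have "\<dots> = 81 * (1 - s)^2 * (1/b + 1/(1-b))^2 * (tent b x powr (-1/4))^2"
    by (simp add: power2_eq_square algebra_simps)
  also have "\<dots> \<le> 81 * (1 - s)^2 * (1/b + 1/(1-b))^2 * edge_weight x"
    by (intro mult_left_mono tent_powr_sq_le_edge_weight[OF b]) auto
  finally show ?thesis .
next
  case False
  then have "tent_slope b x = 0" using b by (auto simp: tent_slope_def)
  then show ?thesis using edge_weight_nonneg[of x] by (simp add: tent_defect_deriv_def)
qed


section \<open>Integrals of power kernels\<close>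

lemma nn_integral_lborel_translate:
  fixes f :: "real \<Rightarrow> ennreal"
  assumes [measurable]: "f \<in> borel_measurable borel"
  shows "(\<integral>\<^sup>+y. f (x - y) \<partial>lborel) = (\<integral>\<^sup>+t. f t \<partial>lborel)"
    and "(\<integral>\<^sup>+y. f (y - x) \<partial>lborel) = (\<integral>\<^sup>+t. f t \<partial>lborel)"
  using nn_integral_real_affine[OF assms, of "-1" x] nn_integral_real_affine[OF assms, of 1 "-x"]
  by simp_all

lemma nn_integral_even_le:
  fixes g :: "real \<Rightarrow> real"
  assumes [measurable]: "g \<in> borel_measurable borel"
  shows "(\<integral>\<^sup>+t. ennreal (g \<bar>t\<bar>) \<partial>lborel) \<le> 2 * (\<integral>\<^sup>+t. ennreal (indicator {0..} t * g t) \<partial>lborel)"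
proof -
  define h where "h t = ennreal (indicator {0..} t * g t)" for t
  have [measurable]: "h \<in> borel_measurable borel" unfolding h_def by measurable
  have "ennreal (g \<bar>t\<bar>) \<le> h t + h (- t)" for t
    by (cases "0 \<le> t") (auto simp: h_def)
  then have "(\<integral>\<^sup>+t. ennreal (g \<bar>t\<bar>) \<partial>lborel) \<le> (\<integral>\<^sup>+t. h t + h (- t) \<partial>lborel)"
    by (intro nn_integral_mono)
  also have "\<dots> = (\<integral>\<^sup>+t. h t \<partial>lborel) + (\<integral>\<^sup>+t. h (- t) \<partial>lborel)"
    by (rule nn_integral_add) auto
  also have "(\<integral>\<^sup>+t. h (- t) \<partial>lborel) = (\<integral>\<^sup>+t. h t \<partial>lborel)"
    using nn_integral_real_affine[of h "-1" 0] by simp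
  finally show ?thesis by (simp add: h_def mult_2)
qed

lemma nn_integral_powr_near_0_le:
  assumes p: "p > -1" and r: "r \<ge> 0"
  shows "(\<integral>\<^sup>+t. ennreal (if \<bar>t\<bar> \<le> r then \<bar>t\<bar> powr p else 0) \<partial>lborel)
    \<le> ennreal (2 * (r powr (p + 1) / (p + 1)))"
proof -
  have eq: "indicator {0..} t * (if t \<le> r then t powr p else 0) = (if t \<in> {0..r} then t powr p else 0)"
    for t :: real
    by (simp add: indicator_def)
  have "(\<integral>\<^sup>+t. ennreal (indicator {0..} t * (if t \<le> r then t powr p else 0)) \<partial>lborel)
      = ennreal (r powr (p + 1) / (p + 1))"
    unfolding eq
  proof (rule nn_integral_has_integral_lborel)
    show "((\<lambda>t. if t \<in> {0..r} then t powr p else 0) has_integral r powr (p + 1) / (p + 1)) UNIV"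
      by (subst has_integral_restrict_UNIV) (rule has_integral_powr_from_0[OF p r])
  qed auto
  moreover have "(\<integral>\<^sup>+t. ennreal (if \<bar>t\<bar> \<le> r then \<bar>t\<bar> powr p else 0) \<partial>lborel)
      \<le> 2 * (\<integral>\<^sup>+t. ennreal (indicator {0..} t * (if t \<le> r then t powr p else 0)) \<partial>lborel)"
    using nn_integral_even_le[of "\<lambda>u. if u \<le> r then u powr p else 0"] by simp
  ultimately show ?thesis
    by (subst ennreal_mult') simp_all
qed

lemma nn_integral_powr_far_le:
  assumes p: "p < -1"
  shows "(\<integral>\<^sup>+t. ennreal (if 1 \<le> \<bar>t\<bar> then \<bar>t\<bar> powr p else 0) \<partial>lborel) \<le> ennreal (2 * (- 1 / (p + 1)))"
proof -
  have eq: "indicator {0..} t * (if 1 \<le> t then t powr p else 0) = (if t \<in> {1..} then t powr p else 0)"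
    for t :: real
    by (simp add: indicator_def)
  have "(\<integral>\<^sup>+t. ennreal (indicator {0..} t * (if 1 \<le> t then t powr p else 0)) \<partial>lborel)
      = ennreal (- 1 / (p + 1))"
    unfolding eq
  proof (rule nn_integral_has_integral_lborel)
    show "((\<lambda>t. if t \<in> {1..} then t powr p else 0) has_integral - 1 / (p + 1)) UNIV"
      using has_integral_powr_to_inf[OF p, of 1] by (subst has_integral_restrict_UNIV) simp
  qed auto
  moreover have "(\<integral>\<^sup>+t. ennreal (if 1 \<le> \<bar>t\<bar> then \<bar>t\<bar> powr p else 0) \<partial>lborel)
      \<le> 2 * (\<integral>\<^sup>+t. ennreal (indicator {0..} t * (if 1 \<le> t then t powr p else 0)) \<partial>lborel)"
    using nn_integral_even_le[of "\<lambda>u. if 1 \<le> u then u powr p else 0"] by simp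
  ultimately show ?thesis
    by (subst ennreal_mult') simp_all
qed

lemma nn_integral_sym_kernel_le:
  fixes k a :: "real \<Rightarrow> real"
  assumes [measurable]: "k \<in> borel_measurable borel" "a \<in> borel_measurable borel"
    and nonneg: "\<And>t. k t \<ge> 0" "\<And>t. a t \<ge> 0" and even: "\<And>t. k (- t) = k t"
    and k_int: "(\<integral>\<^sup>+t. ennreal (k t) \<partial>lborel) \<le> ennreal K"
  shows "(\<integral>\<^sup>+x. (\<integral>\<^sup>+y. ennreal (k (x - y) * (a x + a y)) \<partial>lborel) \<partial>lborel)
      \<le> 2 * ennreal K * (\<integral>\<^sup>+x. ennreal (a x) \<partial>lborel)"
proof -
  let ?A = "\<integral>\<^sup>+x. ennreal (a x) \<partial>lborel"
  have k_int_y: "(\<integral>\<^sup>+y. ennreal (k (x - y)) \<partial>lborel) \<le> ennreal K" for x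
    using nn_integral_lborel_translate(1)[of "\<lambda>t. ennreal (k t)" x] k_int by simp
  have k_int_x: "(\<integral>\<^sup>+x. ennreal (k (x - y)) \<partial>lborel) \<le> ennreal K" for y
  proof -
    have "(\<integral>\<^sup>+x. ennreal (k (x - y)) \<partial>lborel) = (\<integral>\<^sup>+x. ennreal (k (y - x)) \<partial>lborel)"
      using even by (metis minus_diff_eq)
    then show ?thesis using nn_integral_lborel_translate(1)[of "\<lambda>t. ennreal (k t)" y] k_int by simp
  qed
  have split: "ennreal (k (x - y) * (a x + a y))
      = ennreal (a x) * ennreal (k (x - y)) + ennreal (a y) * ennreal (k (x - y))" for x y
    using nonneg by (simp add: distrib_left ennreal_plus[symmetric] ennreal_mult[symmetric]
        mult.commute del: ennreal_plus)
  have "(\<integral>\<^sup>+x. (\<integral>\<^sup>+y. ennreal (k (x - y) * (a x + a y)) \<partial>lborel) \<partial>lborel)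
      = (\<integral>\<^sup>+x. (\<integral>\<^sup>+y. ennreal (a x) * ennreal (k (x - y)) \<partial>lborel) \<partial>lborel)
      + (\<integral>\<^sup>+x. (\<integral>\<^sup>+y. ennreal (a y) * ennreal (k (x - y)) \<partial>lborel) \<partial>lborel)"
    unfolding split by (subst nn_integral_add[symmetric]) (auto intro!: nn_integral_cong nn_integral_add)
  also have "(\<integral>\<^sup>+x. (\<integral>\<^sup>+y. ennreal (a x) * ennreal (k (x - y)) \<partial>lborel) \<partial>lborel)
      = (\<integral>\<^sup>+x. ennreal (a x) * (\<integral>\<^sup>+y. ennreal (k (x - y)) \<partial>lborel) \<partial>lborel)"
    by (intro nn_integral_cong nn_integral_cmult) auto
  also have "\<dots> \<le> (\<integral>\<^sup>+x. ennreal (a x) * ennreal K \<partial>lborel)"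
    by (intro nn_integral_mono mult_left_mono k_int_y) auto
  also have "(\<integral>\<^sup>+x. (\<integral>\<^sup>+y. ennreal (a y) * ennreal (k (x - y)) \<partial>lborel) \<partial>lborel)
      = (\<integral>\<^sup>+y. (\<integral>\<^sup>+x. ennreal (a y) * ennreal (k (x - y)) \<partial>lborel) \<partial>lborel)"
    by (rule lborel_pair.Fubini'[symmetric]) measurable
  also have "\<dots> = (\<integral>\<^sup>+y. ennreal (a y) * (\<integral>\<^sup>+x. ennreal (k (x - y)) \<partial>lborel) \<partial>lborel)"
    by (intro nn_integral_cong nn_integral_cmult) auto
  also have "\<dots> \<le> (\<integral>\<^sup>+y. ennreal (a y) * ennreal K \<partial>lborel)"
    by (intro nn_integral_mono mult_left_mono k_int_x) auto
  also have "(\<integral>\<^sup>+x. ennreal (a x) * ennreal K \<partial>lborel) = ennreal K * ?A"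
    by (subst nn_integral_multc) (auto simp: mult.commute)
  finally show ?thesis
    by (simp add: mult_2 distrib_right)
qed

definition near_kernel :: "real \<Rightarrow> real \<Rightarrow> real" where
  "near_kernel s t = (if \<bar>t\<bar> \<le> 1 then \<bar>t\<bar> powr (1 - 2 * s) else 0)"

definition far_kernel :: "real \<Rightarrow> real \<Rightarrow> real" where
  "far_kernel s t = (if 1 \<le> \<bar>t\<bar> then \<bar>t\<bar> powr (- 1 - 2 * s) else 0)"

lemma near_kernel_measurable [measurable]: "near_kernel s \<in> borel_measurable borel"
  unfolding near_kernel_def by measurable

lemma far_kernel_measurable [measurable]: "far_kernel s \<in> borel_measurable borel"
  unfolding far_kernel_def by measurable

lemma nn_integral_near_kernel_le:
  assumes "s < 1"
  shows "(\<integral>\<^sup>+t. ennreal (near_kernel s t) \<partial>lborel) \<le> ennreal (1 / (1 - s))"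
proof -
  have "2 * (1 powr (1 - 2 * s + 1) / (1 - 2 * s + 1)) = 1 / (1 - s)"
    using assms by (simp add: field_simps)
  then show ?thesis
    using nn_integral_powr_near_0_le[of "1 - 2 * s" 1] assms by (simp add: near_kernel_def)
qed

lemma nn_integral_far_kernel_le:
  assumes "0 < s"
  shows "(\<integral>\<^sup>+t. ennreal (far_kernel s t) \<partial>lborel) \<le> ennreal (1 / s)"
proof -
  have "2 * (- 1 / (- 1 - 2 * s + 1)) = 1 / s"
    using assms by (simp add: field_simps)
  then show ?thesis
    using nn_integral_powr_far_le[of "- 1 - 2 * s"] assms by (simp add: far_kernel_def)
qed

lemma nn_integral_edge_weight_le: "(\<integral>\<^sup>+x. ennreal (edge_weight x) \<partial>lborel) \<le> 8"
proof -
  define g where "g t = ennreal (if \<bar>t\<bar> \<le> 1 then \<bar>t\<bar> powr (-1/2) else 0)" for t :: real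
  have [measurable]: "g \<in> borel_measurable borel" unfolding g_def by measurable
  have "(\<integral>\<^sup>+t. g t \<partial>lborel) \<le> ennreal 4"
    using nn_integral_powr_near_0_le[of "-1/2" 1] unfolding g_def by simp
  have "ennreal (edge_weight x) \<le> g x + g (x - 1)" for x
    by (cases "x \<in> {0<..<1}")
       (auto simp: edge_weight_def g_def ennreal_plus[symmetric] abs_minus_commute simp del: ennreal_plus)
  then have "(\<integral>\<^sup>+x. ennreal (edge_weight x) \<partial>lborel) \<le> (\<integral>\<^sup>+x. g x + g (x - 1) \<partial>lborel)"
    by (intro nn_integral_mono)
  also have "\<dots> = (\<integral>\<^sup>+x. g x \<partial>lborel) + (\<integral>\<^sup>+x. g (x - 1) \<partial>lborel)"
    by (rule nn_integral_add) auto
  also have "\<dots> = 2 * (\<integral>\<^sup>+x. g x \<partial>lborel)"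
    using nn_integral_lborel_translate(2)[of g 1] by (simp add: mult_2)
  also have "\<dots> \<le> 2 * ennreal 4"
    by (intro mult_left_mono \<open>(\<integral>\<^sup>+t. g t \<partial>lborel) \<le> ennreal 4\<close>) auto
  finally show ?thesis
    by (simp add: ennreal_mult[symmetric])
qed


lemma nn_integral_near_kernel_edge_weight_le:
  assumes "s < 1"
  shows "(\<integral>\<^sup>+x. (\<integral>\<^sup>+y. ennreal (near_kernel s (x - y) * (edge_weight x + edge_weight y)) \<partial>lborel) \<partial>lborel)
    \<le> 2 * ennreal (1 / (1 - s)) * 8"
proof -
  have "(\<integral>\<^sup>+x. (\<integral>\<^sup>+y. ennreal (near_kernel s (x - y) * (edge_weight x + edge_weight y)) \<partial>lborel) \<partial>lborel)
      \<le> 2 * ennreal (1 / (1 - s)) * (\<integral>\<^sup>+x. ennreal (edge_weight x) \<partial>lborel)"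
    by (intro nn_integral_sym_kernel_le nn_integral_near_kernel_le edge_weight_nonneg)
       (use assms in \<open>auto simp: near_kernel_def\<close>)
  also have "\<dots> \<le> 2 * ennreal (1 / (1 - s)) * 8"
    by (intro mult_left_mono nn_integral_edge_weight_le) auto
  finally show ?thesis .
qed

lemma nn_integral_far_kernel_indicator_le:
  assumes "0 < s"
  shows "(\<integral>\<^sup>+x. (\<integral>\<^sup>+y. ennreal (far_kernel s (x - y) * (indicator {0<..<1} x + indicator {0<..<1} y))
      \<partial>lborel) \<partial>lborel) \<le> 2 * ennreal (1 / s)"
proof -
  have "(\<integral>\<^sup>+x. (\<integral>\<^sup>+y. ennreal (far_kernel s (x - y) * (indicator {0<..<1} x + indicator {0<..<1} y))
      \<partial>lborel) \<partial>lborel) \<le> 2 * ennreal (1 / s) * (\<integral>\<^sup>+x. ennreal (indicator {0<..<1::real} x) \<partial>lborel)"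
    by (intro nn_integral_sym_kernel_le nn_integral_far_kernel_le)
       (use assms in \<open>auto simp: far_kernel_def\<close>)
  then show ?thesis by (simp add: ennreal_indicator)
qed

section \<open>The \<open>\<widetilde>H\<^sup>s\<close> seminorm of the defect\<close>

lemma tent_defect_diff_sq_le_near:
  assumes b: "0 < b" "b < 1" and s: "7/8 \<le> s" "s < 1"
  shows "(tent_defect s b x - tent_defect s b y)^2
    \<le> 162 * (1 - s)^2 * (1/b + 1/(1-b))^2 * (edge_weight x + edge_weight y) * (x - y)^2"
proof -
  define L where "L = 1/b + 1/(1-b)"
  define rx where "rx = tent b x powr (-1/4)"
  define ry where "ry = tent b y powr (-1/4)"
  have "\<bar>tent_defect s b x - tent_defect s b y\<bar> \<le> 9 * (1 - s) * L * \<bar>x - y\<bar> * (rx + ry)"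
    using tent_defect_diff_le[OF b s, of x y] by (simp add: L_def rx_def ry_def)
  then have "(tent_defect s b x - tent_defect s b y)^2 \<le> (9 * (1 - s) * L * \<bar>x - y\<bar> * (rx + ry))^2"
    by (metis abs_ge_zero power2_abs power_mono)
  also have "\<dots> = 81 * (1 - s)^2 * L^2 * (x - y)^2 * (rx + ry)^2"
    by (simp only: power_mult_distrib power2_abs) simp
  also have "\<dots> \<le> 81 * (1 - s)^2 * L^2 * (x - y)^2 * (2 * (edge_weight x + edge_weight y))"
  proof (intro mult_left_mono)
    have "(rx + ry)^2 \<le> 2 * (rx^2 + ry^2)"
      using zero_le_power2[of "rx - ry"] by (simp add: power2_eq_square algebra_simps)
    also have "\<dots> \<le> 2 * (edge_weight x + edge_weight y)"
      using tent_powr_sq_le_edge_weight[OF b, of x] tent_powr_sq_le_edge_weight[OF b, of y]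
      by (simp add: rx_def ry_def)
    finally show "(rx + ry)^2 \<le> 2 * (edge_weight x + edge_weight y)" .
  qed auto
  also have "\<dots> = 162 * (1 - s)^2 * L^2 * (edge_weight x + edge_weight y) * (x - y)^2"
    by (simp add: algebra_simps)
  finally show ?thesis by (simp only: L_def)
qed

lemma tent_defect_diff_sq_le_far:
  assumes b: "0 < b" "b < 1" and s: "7/8 \<le> s" "s < 1"
  shows "(tent_defect s b x - tent_defect s b y)^2
    \<le> 128 * (1 - s)^2 * (indicator {0<..<1} x + indicator {0<..<1} y)"
proof -
  have sq: "(tent_defect s b z)^2 \<le> 64 * (1 - s)^2 * indicator {0<..<1} z" for z
  proof (cases "z \<in> {0<..<1}")
    case True
    then have "\<bar>tent_defect s b z\<bar> \<le> 8 * (1 - s)" using abs_tent_defect_le[OF b s, of z] by simp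
    then have "(tent_defect s b z)^2 \<le> (8 * (1 - s))^2" by (metis abs_ge_zero power2_abs power_mono)
    also have "(8 * (1 - s))^2 = 64 * (1 - s)^2" by (simp only: power_mult_distrib) simp
    finally show ?thesis using True by simp
  next
    case False
    then show ?thesis using abs_tent_defect_le[OF b s, of z] by simp
  qed
  have "(tent_defect s b x - tent_defect s b y)^2 \<le> 2 * (tent_defect s b x)^2 + 2 * (tent_defect s b y)^2"
    using zero_le_power2[of "tent_defect s b x + tent_defect s b y"]
    by (simp add: power2_eq_square algebra_simps)
  also have "\<dots> \<le> 2 * (64 * (1 - s)^2 * indicator {0<..<1} x) + 2 * (64 * (1 - s)^2 * indicator {0<..<1} y)"
    using sq[of x] sq[of y] by linarith
  also have "\<dots> = 128 * (1 - s)^2 * (indicator {0<..<1} x + indicator {0<..<1} y)"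
    by (simp add: algebra_simps)
  finally show ?thesis .
qed

lemma power2_divide_powr:
  fixes d a :: real
  assumes "0 < d"
  shows "d^2 / d powr a = d powr (2 - a)"
proof -
  have "d^2 / d powr a = d powr 2 / d powr a" using assms by (simp add: powr_numeral)
  also have "\<dots> = d powr (2 - a)" by (rule powr_diff[symmetric])
  finally show ?thesis .
qed

text \<open>Both pieces have the shape \<open>k (x - y) * (a x + a y)\<close> of \<open>nn_integral_sym_kernel_le\<close>:
  the near one comes from the Lipschitz-type bound, the far one from the size of the defect.\<close>

lemma tent_defect_quotient_le:
  assumes b: "0 < b" "b < 1" and s: "7/8 \<le> s" "s < 1"
  shows "(tent_defect s b x - tent_defect s b y)^2 / \<bar>x - y\<bar> powr (1 + 2 * s)
    \<le> (1 - s)^2 * (162 * (1/b + 1/(1-b))^2) * (near_kernel s (x - y) * (edge_weight x + edge_weight y))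
      + (1 - s)^2 * 128 * (far_kernel s (x - y) * (indicator {0<..<1} x + indicator {0<..<1} y))"
    (is "?q \<le> ?near + ?far")
proof -
  have near: "?near \<ge> 0" using edge_weight_nonneg[of x] edge_weight_nonneg[of y]
    by (simp add: near_kernel_def)
  have far: "?far \<ge> 0" by (simp add: far_kernel_def)
  define d where "d = \<bar>x - y\<bar>"
  have "d \<ge> 0" by (simp add: d_def)
  then consider "d = 0" | "0 < d" "d \<le> 1" | "1 < d" by linarith
  then show ?thesis
  proof cases
    case 1
    then show ?thesis using near far by (simp add: d_def)
  next
    case 2
    define K where "K = 162 * (1 - s)^2 * (1/b + 1/(1-b))^2 * (edge_weight x + edge_weight y)"
    have "K \<ge> 0" using edge_weight_nonneg[of x] edge_weight_nonneg[of y] by (simp add: K_def)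
    have "?q = (tent_defect s b x - tent_defect s b y)^2 / d powr (1 + 2 * s)"
      by (simp add: d_def)
    also have "\<dots> \<le> K * d^2 / d powr (1 + 2 * s)"
      using tent_defect_diff_sq_le_near[OF b s, of x y]
      by (intro divide_right_mono) (simp_all add: K_def d_def)
    also have "\<dots> = K * (d^2 / d powr (1 + 2 * s))"
      by simp
    also have "\<dots> = K * d powr (1 - 2 * s)"
      using power2_divide_powr[of d "1 + 2 * s"] 2 by simp
    also have "\<dots> = ?near"
      using 2 by (simp add: K_def near_kernel_def d_def)
    finally show ?thesis using far by linarith
  next
    case 3
    define K where "K = 128 * (1 - s)^2 * (indicator {0<..<1} x + indicator {0<..<1} y)"
    have "?q = (tent_defect s b x - tent_defect s b y)^2 / d powr (1 + 2 * s)"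
      by (simp add: d_def)
    also have "\<dots> \<le> K / d powr (1 + 2 * s)"
      using tent_defect_diff_sq_le_far[OF b s, of x y] by (intro divide_right_mono) (simp_all add: K_def)
    also have "\<dots> = K * d powr (- 1 - 2 * s)"
      using powr_minus[of d "1 + 2 * s"] by (simp add: divide_inverse)
    also have "\<dots> = ?far"
      using 3 by (simp add: K_def far_kernel_def d_def)
    finally show ?thesis using near by linarith
  qed
qed

lemma nn_integral_tent_defect_quotient_le:
  assumes b: "0 < b" "b < 1" and s: "7/8 \<le> s" "s < 1"
  shows "(\<integral>\<^sup>+x. (\<integral>\<^sup>+y. ennreal ((tent_defect s b x - tent_defect s b y)^2
      / \<bar>x - y\<bar> powr (1 + 2 * s)) \<partial>lborel) \<partial>lborel)
    \<le> ennreal ((1 - s) * (2592 * (1/b + 1/(1-b))^2 + 512))"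
proof -
  define c1 where "c1 = (1 - s)^2 * (162 * (1/b + 1/(1-b))^2)"
  define c2 where "c2 = (1 - s)^2 * 128"
  define N where "N x y = near_kernel s (x - y) * (edge_weight x + edge_weight y)" for x y
  define F where "F x y = far_kernel s (x - y) * (indicator {0<..<1} x + indicator {0<..<1} y)" for x y
  have c1: "c1 \<ge> 0" and c2: "c2 \<ge> 0" by (simp_all add: c1_def c2_def)
  have [measurable]: "(\<lambda>(x, y). N x y) \<in> borel_measurable (lborel \<Otimes>\<^sub>M lborel)"
    "(\<lambda>(x, y). F x y) \<in> borel_measurable (lborel \<Otimes>\<^sub>M lborel)"
    unfolding N_def F_def by measurable
  have pointwise: "ennreal ((tent_defect s b x - tent_defect s b y)^2 / \<bar>x - y\<bar> powr (1 + 2 * s))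
      \<le> ennreal c1 * ennreal (N x y) + ennreal c2 * ennreal (F x y)" for x y
  proof -
    have "N x y \<ge> 0" "F x y \<ge> 0"
      using edge_weight_nonneg[of x] edge_weight_nonneg[of y]
      by (simp_all add: N_def F_def near_kernel_def far_kernel_def)
    then show ?thesis
      using tent_defect_quotient_le[OF b s, of x y] c1 c2
      by (simp add: c1_def c2_def N_def F_def ennreal_mult[symmetric] ennreal_plus[symmetric]
          ennreal_leI del: ennreal_plus)
  qed
  have NN: "(\<integral>\<^sup>+x. (\<integral>\<^sup>+y. ennreal (N x y) \<partial>lborel) \<partial>lborel) \<le> 2 * ennreal (1 / (1 - s)) * 8"
    unfolding N_def using s by (intro nn_integral_near_kernel_edge_weight_le) simp
  have FF: "(\<integral>\<^sup>+x. (\<integral>\<^sup>+y. ennreal (F x y) \<partial>lborel) \<partial>lborel) \<le> 2 * ennreal (1 / s)"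
    unfolding F_def using s by (intro nn_integral_far_kernel_indicator_le) simp
  have "(\<integral>\<^sup>+x. (\<integral>\<^sup>+y. ennreal ((tent_defect s b x - tent_defect s b y)^2
      / \<bar>x - y\<bar> powr (1 + 2 * s)) \<partial>lborel) \<partial>lborel)
      \<le> (\<integral>\<^sup>+x. (\<integral>\<^sup>+y. ennreal c1 * ennreal (N x y) + ennreal c2 * ennreal (F x y) \<partial>lborel) \<partial>lborel)"
    by (intro nn_integral_mono pointwise)
  also have "\<dots> = ennreal c1 * (\<integral>\<^sup>+x. (\<integral>\<^sup>+y. ennreal (N x y) \<partial>lborel) \<partial>lborel)
      + ennreal c2 * (\<integral>\<^sup>+x. (\<integral>\<^sup>+y. ennreal (F x y) \<partial>lborel) \<partial>lborel)"
    by (simp add: nn_integral_add nn_integral_cmult)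
  also have "\<dots> \<le> ennreal c1 * (2 * ennreal (1 / (1 - s)) * 8) + ennreal c2 * (2 * ennreal (1 / s))"
    by (intro add_mono mult_left_mono NN FF) auto
  also have "\<dots> = ennreal (c1 * (16 / (1 - s)) + c2 * (2 / s))"
    using c1 c2 s
    by (simp add: ennreal_numeral[symmetric] ennreal_mult[symmetric] ennreal_plus[symmetric]
        del: ennreal_numeral ennreal_plus)
  also have "\<dots> \<le> ennreal ((1 - s) * (2592 * (1/b + 1/(1-b))^2 + 512))"
  proof (rule ennreal_leI)
    have "c2 * (2 / s) = (1 - s) * (256 * ((1 - s) / s))"
      using s by (simp add: c2_def power2_eq_square field_simps)
    also have "\<dots> \<le> (1 - s) * 512"
      using s by (intro mult_left_mono) (auto simp: divide_le_eq)
    finally have "c2 * (2 / s) \<le> (1 - s) * 512" .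
    moreover have "c1 * (16 / (1 - s)) = (1 - s) * (2592 * (1/b + 1/(1-b))^2)"
    proof -
      have "(1 - s)^2 * (162 * A) * (16 / (1 - s)) = (1 - s) * (2592 * A)" for A
        using s by (simp add: power2_eq_square field_simps)
      then show ?thesis unfolding c1_def .
    qed
    ultimately show "c1 * (16 / (1 - s)) + c2 * (2 / s) \<le> (1 - s) * (2592 * (1/b + 1/(1-b))^2 + 512)"
      unfolding distrib_left by linarith
  qed
  finally show ?thesis .
qed

text \<open>The factor \<open>1 / \<Gamma>(1 - s) = (1 - s) / \<Gamma>(2 - s)\<close> in \<open>C(s)\<close> produces the zero at \<open>s = 1\<close>.\<close>

lemma Cs_le: "\<exists>K>0. \<forall>s. 1/2 \<le> s \<and> s < 1 \<longrightarrow> 0 \<le> Cs s \<and> Cs s \<le> K * (1 - s)"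
proof -
  have cont: "continuous_on {1..2::real} Gamma"
    by (rule continuous_on_Gamma) (auto simp: nonpos_Ints_def)
  obtain xM where xM: "xM \<in> {1..2}" "\<forall>y\<in>{1..2::real}. Gamma y \<le> Gamma xM"
    using continuous_attains_sup[OF compact_Icc _ cont] by auto
  obtain xm where xm: "xm \<in> {1..2}" "\<forall>y\<in>{1..2::real}. Gamma xm \<le> Gamma y"
    using continuous_attains_inf[OF compact_Icc _ cont] by auto
  define M where "M = Gamma xM"
  define m where "m = Gamma xm"
  have m0: "m > 0" and M0: "M > 0" using xm xM by (simp_all add: m_def M_def)
  show ?thesis
  proof (intro exI[of _ "4 * M / m"] conjI allI impI)
    show "0 < 4 * M / m" using m0 M0 by simp
    fix s :: real assume s: "1/2 \<le> s \<and> s < 1"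
    have pos: "Gamma (2 - s) > 0" "Gamma (s + 1/2) > 0" "Gamma (1 - s) > 0" using s by auto
    have "1 - s \<notin> \<int>\<^sub>\<le>\<^sub>0" using s nonpos_Ints_nonpos by fastforce
    then have Gamma_2: "Gamma (2 - s) = (1 - s) * Gamma (1 - s)"
      using Gamma_plus1[of "1 - s"] by (simp add: algebra_simps)
    define A where "A = 2 powr (2 * s) * s * Gamma (s + 1/2)"
    have "Cs s = A / (sqrt pi * Gamma (1 - s))"
      by (simp add: Cs_def A_def)
    also have "\<dots> = ((1 - s) * A) / ((1 - s) * (sqrt pi * Gamma (1 - s)))"
      using s by (intro nonzero_mult_divide_mult_cancel_left[symmetric]) simp
    also have "\<dots> = A * (1 - s) / (sqrt pi * Gamma (2 - s))"
      unfolding Gamma_2 by (simp add: mult.commute mult.left_commute)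
    finally have Cs_eq: "Cs s = A * (1 - s) / (sqrt pi * Gamma (2 - s))" .
    have A0: "0 \<le> A" using s pos by (simp add: A_def)
    have "A \<le> 4 * 1 * M"
      unfolding A_def
    proof (intro mult_mono)
      have "2 powr (2 * s) \<le> 2 powr (2::real)" using s by (intro powr_mono) auto
      then show "2 powr (2 * s) \<le> 4" by simp
      show "Gamma (s + 1/2) \<le> M" using xM s by (auto simp: M_def)
    qed (use s pos in auto)
    then have num: "A * (1 - s) \<le> 4 * M * (1 - s)"
      using s by (intro mult_right_mono) auto
    have "m \<le> Gamma (2 - s)" using xm s by (auto simp: m_def)
    also have "\<dots> \<le> sqrt pi * Gamma (2 - s)"
      using pi_gt3 pos mult_right_mono[of 1 "sqrt pi" "Gamma (2 - s)"] by simp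
    finally have den: "m \<le> sqrt pi * Gamma (2 - s)" .
    have "Cs s \<le> 4 * M * (1 - s) / m"
      unfolding Cs_eq using num den A0 s m0 by (intro frac_le) auto
    then show "Cs s \<le> 4 * M / m * (1 - s)" by simp
    show "0 \<le> Cs s" unfolding Cs_eq using s pos A0 by simp
  qed
qed

lemma Hs_tilde_norm_sq_tent_defect_le:
  assumes b: "0 < b" "b < 1"
  obtains K where "0 \<le> K"
    "\<And>s. 7/8 \<le> s \<Longrightarrow> s < 1 \<Longrightarrow> Hs_tilde_norm_sq s (tent_defect s b) \<le> ennreal ((K * (1 - s))^2)"
proof -
  obtain KC where KC: "KC > 0" "\<forall>s. 1/2 \<le> s \<and> s < 1 \<longrightarrow> 0 \<le> Cs s \<and> Cs s \<le> KC * (1 - s)"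
    using Cs_le by blast
  define A where "A = 2592 * (1/b + 1/(1-b))^2 + 512"
  have A: "A \<ge> 0" by (simp add: A_def)
  show ?thesis
  proof (rule that[of "sqrt (KC * A / 2)"])
    show "0 \<le> sqrt (KC * A / 2)" using KC A by simp
    fix s :: real assume s: "7/8 \<le> s" "s < 1"
    then have Cs: "0 \<le> Cs s" "Cs s \<le> KC * (1 - s)" using KC(2) by auto
    have "Hs_tilde_norm_sq s (tent_defect s b) \<le> ennreal (Cs s / 2) * ennreal ((1 - s) * A)"
      unfolding Hs_tilde_norm_sq_def A_def
      by (intro mult_left_mono nn_integral_tent_defect_quotient_le[OF b s]) auto
    also have "\<dots> = ennreal (Cs s / 2 * ((1 - s) * A))"
      using Cs s A by (intro ennreal_mult[symmetric]) auto
    also have "\<dots> \<le> ennreal (KC * A / 2 * (1 - s)^2)"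
    proof (rule ennreal_leI)
      have "Cs s / 2 * ((1 - s) * A) \<le> KC * (1 - s) / 2 * ((1 - s) * A)"
        using Cs s A by (intro mult_right_mono divide_right_mono) auto
      then show "Cs s / 2 * ((1 - s) * A) \<le> KC * A / 2 * (1 - s)^2"
        by (simp add: power2_eq_square algebra_simps)
    qed
    also have "\<dots> = ennreal ((sqrt (KC * A / 2) * (1 - s))^2)"
      using KC A by (simp add: power_mult_distrib)
    finally show "Hs_tilde_norm_sq s (tent_defect s b) \<le> ennreal ((sqrt (KC * A / 2) * (1 - s))^2)" .
  qed
qed


section \<open>The \<open>H\<^sup>1\<close> norm of the defect\<close>

lemma
  shows set_integrable_edge_weight: "set_integrable lborel I01 edge_weight"
    and set_integral_edge_weight_le: "(LINT x:I01|lborel. edge_weight x) \<le> 8"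
proof -
  have I01_weight: "(\<lambda>x. indicator I01 x *\<^sub>R edge_weight x) = edge_weight"
    by (auto simp: fun_eq_iff edge_weight_def I01_def indicator_def)
  have finite: "(\<integral>\<^sup>+x. ennreal (edge_weight x) \<partial>lborel) < \<infinity>"
    using nn_integral_edge_weight_le by (simp add: le_less_trans)
  have "integrable lborel edge_weight"
    by (rule integrableI_nonneg) (use finite edge_weight_nonneg in auto)
  then show "set_integrable lborel I01 edge_weight"
    unfolding set_integrable_def I01_weight .
  have "(LINT x:I01|lborel. edge_weight x) = enn2real (\<integral>\<^sup>+x. ennreal (edge_weight x) \<partial>lborel)"
    unfolding set_lebesgue_integral_def I01_weight
    by (rule integral_eq_nn_integral) (use edge_weight_nonneg in auto)
  also have "\<dots> \<le> 8"
    using nn_integral_edge_weight_le finite by (simp add: enn2real_leI)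
  finally show "(LINT x:I01|lborel. edge_weight x) \<le> 8" .
qed

lemma L2_I_if_sq_le:
  assumes [measurable]: "f \<in> borel_measurable lborel" and "set_integrable lborel I01 B"
    and "\<And>x. (f x)^2 \<le> B x"
  shows "L2_I f" "(LINT x:I01|lborel. (f x)^2) \<le> (LINT x:I01|lborel. B x)"
proof -
  have "set_integrable lborel I01 (\<lambda>x. (f x)^2)"
    by (rule set_integrable_bound[OF assms(2)])
       (use assms(3) in \<open>auto simp: set_borel_measurable_def intro: order_trans[OF _ abs_ge_self]\<close>)
  then show "L2_I f" "(LINT x:I01|lborel. (f x)^2) \<le> (LINT x:I01|lborel. B x)"
    unfolding L2_I_def using assms by (auto intro: set_integral_mono)
qed

lemma
  assumes b: "0 < b" "b < 1" and s: "7/8 \<le> s" "s < 1"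
  shows L2_I_tent_defect: "L2_I (tent_defect s b)"
    and set_integral_tent_defect_sq_le: "(LINT x:I01|lborel. (tent_defect s b x)^2) \<le> 64 * (1 - s)^2"
proof -
  have const: "set_integrable lborel I01 (\<lambda>x. 64 * (1 - s)^2)"
    by (simp add: set_integrable_def I01_def integrable_real_indicator)
  have "(tent_defect s b x)^2 \<le> 64 * (1 - s)^2" for x
  proof -
    have "\<bar>tent_defect s b x\<bar> \<le> 8 * (1 - s)"
      using abs_tent_defect_le[OF b s, of x] s by (cases "0 < x \<and> x < 1") (auto simp: indicator_def)
    then have "\<bar>tent_defect s b x\<bar>^2 \<le> (8 * (1 - s))^2"
      by (intro power_mono) auto
    also have "(8 * (1 - s))^2 = 64 * (1 - s)^2"
      by (simp only: power_mult_distrib) simp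
    finally show ?thesis by simp
  qed
  note L2 = L2_I_if_sq_le[OF _ const this]
  show "L2_I (tent_defect s b)" by (rule L2(1)) measurable
  have "(LINT x:I01|lborel. (tent_defect s b x)^2) \<le> (LINT x:I01|lborel. 64 * (1 - s)^2)"
    by (rule L2(2)) measurable
  also have "\<dots> = 64 * (1 - s)^2"
    using set_integral_const[of I01 lborel "64 * (1 - s)^2"] by (simp add: I01_def)
  finally show "(LINT x:I01|lborel. (tent_defect s b x)^2) \<le> 64 * (1 - s)^2" .
qed

lemma
  assumes b: "0 < b" "b < 1" and s: "7/8 \<le> s" "s < 1"
  shows L2_I_tent_defect_deriv: "L2_I (tent_defect_deriv s b)"
    and set_integral_tent_defect_deriv_sq_le:
      "(LINT x:I01|lborel. (tent_defect_deriv s b x)^2) \<le> 648 * (1 - s)^2 * (1/b + 1/(1-b))^2"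
proof -
  define K where "K = 81 * (1 - s)^2 * (1/b + 1/(1-b))^2"
  have K: "K \<ge> 0" by (simp add: K_def)
  note L2 = L2_I_if_sq_le[OF _ set_integrable_mult_right[OF set_integrable_edge_weight, of K]
      tent_defect_deriv_sq_le[OF b s, folded K_def]]
  show "L2_I (tent_defect_deriv s b)" by (rule L2(1)) measurable
  have "(LINT x:I01|lborel. (tent_defect_deriv s b x)^2) \<le> (LINT x:I01|lborel. K * edge_weight x)"
    by (rule L2(2)) measurable
  also have "\<dots> = K * (LINT x:I01|lborel. edge_weight x)"
    by simp
  also have "\<dots> \<le> K * 8"
    using set_integral_edge_weight_le K by (rule mult_left_mono)
  also have "\<dots> = 648 * (1 - s)^2 * (1/b + 1/(1-b))^2"
    by (simp add: K_def algebra_simps)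
  finally show "(LINT x:I01|lborel. (tent_defect_deriv s b x)^2) \<le> 648 * (1 - s)^2 * (1/b + 1/(1-b))^2" .
qed

lemma weak_deriv_tent_defect:
  assumes b: "0 < b" "b < 1" and s: "7/8 \<le> s" "s < 1"
  shows "weak_deriv (tent_defect s b) (tent_defect_deriv s b)"
proof (rule weak_deriv_if_has_derivative)
  show "continuous_on UNIV (tent_defect s b)"
    using s by (intro continuous_on_tent_defect) auto
  show "\<bar>tent_defect s b x\<bar> \<le> 8" for x
    using abs_tent_defect_le[OF b s, of x] s by (cases "0 < x \<and> x < 1") (auto simp: indicator_def)
  show "set_integrable lborel I01 (tent_defect_deriv s b)"
    using set_integrable_if_L2_I[OF L2_I_tent_defect_deriv[OF b s]] .
  show "(tent_defect s b has_real_derivative tent_defect_deriv s b x) (at x)"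
    if "x \<in> I01" "x \<notin> {b}" for x
    using tent_defect_has_derivative[OF b] that by (auto simp: I01_def)
qed auto

text \<open>\<open>H1_norm\<close> uses an arbitrary weak derivative, which equals \<open>tent_defect_deriv\<close> a.e.\<close>

lemma
  assumes b: "0 < b" "b < 1" and s: "7/8 \<le> s" "s < 1"
  shows in_H1_tent_defect: "in_H1 (tent_defect s b)"
    and H1_norm_tent_defect_le: "H1_norm (tent_defect s b) \<le> sqrt (64 + 648 * (1/b + 1/(1-b))^2) * (1 - s)"
proof -
  note deriv = L2_I_tent_defect_deriv[OF b s] weak_deriv_tent_defect[OF b s]
  show "in_H1 (tent_defect s b)"
    unfolding in_H1_def using L2_I_tent_defect[OF b s] deriv by blast
  define g where "g = (SOME g. L2_I g \<and> weak_deriv (tent_defect s b) g)"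
  have g: "L2_I g \<and> weak_deriv (tent_defect s b) g"
    unfolding g_def by (rule someI[of _ "tent_defect_deriv s b"]) (use deriv in auto)
  then have [measurable]: "g \<in> borel_measurable lborel" by (simp add: L2_I_def)
  have "AE x in lborel. x \<in> I01 \<longrightarrow> g x = tent_defect_deriv s b x"
    using weak_deriv_unique g deriv by blast
  then have "(LINT x:I01|lborel. (g x)^2) = (LINT x:I01|lborel. (tent_defect_deriv s b x)^2)"
    by (intro set_lebesgue_integral_cong_AE) (auto elim!: AE_mp simp: I01_def)
  then have "H1_norm (tent_defect s b)
      = sqrt ((LINT x:I01|lborel. (tent_defect s b x)^2) + (LINT x:I01|lborel. (tent_defect_deriv s b x)^2))"
    unfolding H1_norm_def g_def[symmetric] by simp
  also have "\<dots> \<le> sqrt ((1 - s)^2 * (64 + 648 * (1/b + 1/(1-b))^2))"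
    using set_integral_tent_defect_sq_le[OF b s] set_integral_tent_defect_deriv_sq_le[OF b s]
    by (intro real_sqrt_le_mono) (simp add: algebra_simps)
  also have "\<dots> = sqrt (64 + 648 * (1/b + 1/(1-b))^2) * (1 - s)"
    using s by (simp add: real_sqrt_mult)
  finally show "H1_norm (tent_defect s b) \<le> sqrt (64 + 648 * (1/b + 1/(1-b))^2) * (1 - s)" .
qed


theorem proposition4p2:
  fixes b :: real
  assumes "0 < b" and "b < 1"
  shows "\<exists>s0 C. 1/2 < s0 \<and> s0 < 1 \<and> C > 0 \<and>
    (\<forall>s. s0 < s \<and> s < 1 \<longrightarrow>
       Hs_tilde_norm_sq s (\<lambda>x. phi_s s b x - phi b x) \<le> ennreal ((C * (1 - s))^2) \<and>
       in_H1 (\<lambda>x. phi_s s b x - phi b x) \<and>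
       H1_norm (\<lambda>x. phi_s s b x - phi b x) \<le> C * (1 - s))"
proof -
  obtain K where K: "0 \<le> K" "\<And>s. 7/8 \<le> s \<Longrightarrow> s < 1 \<Longrightarrow>
      Hs_tilde_norm_sq s (tent_defect s b) \<le> ennreal ((K * (1 - s))^2)"
    by (rule Hs_tilde_norm_sq_tent_defect_le[OF assms]) blast
  define C where "C = max 1 (max K (sqrt (64 + 648 * (1/b + 1/(1-b))^2)))"
  have "\<forall>s. 7/8 < s \<and> s < 1 \<longrightarrow>
      Hs_tilde_norm_sq s (tent_defect s b) \<le> ennreal ((C * (1 - s))^2) \<and>
      in_H1 (tent_defect s b) \<and> H1_norm (tent_defect s b) \<le> C * (1 - s)"
  proof (intro allI impI conjI)
    fix s :: real assume "7/8 < s \<and> s < 1"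
    then have s: "7/8 \<le> s" "s < 1" by auto
    have "(K * (1 - s))^2 \<le> (C * (1 - s))^2"
      using K(1) s by (intro power_mono mult_right_mono) (auto simp: C_def)
    then show "Hs_tilde_norm_sq s (tent_defect s b) \<le> ennreal ((C * (1 - s))^2)"
      using K(2)[OF s] ennreal_leI order_trans by blast
    show "in_H1 (tent_defect s b)"
      by (rule in_H1_tent_defect[OF assms s])
    have "sqrt (64 + 648 * (1/b + 1/(1-b))^2) * (1 - s) \<le> C * (1 - s)"
      using s by (intro mult_right_mono) (auto simp: C_def)
    then show "H1_norm (tent_defect s b) \<le> C * (1 - s)"
      using H1_norm_tent_defect_le[OF assms s] by linarith
  qed
  then show ?thesis
    unfolding phi_s_minus_phi_eq_tent_defect[OF assms]
    by (intro exI[of _ "7/8"] exI[of _ C]) (auto simp: C_def)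
qed

end
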